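(* Let $(L,S,\alpha,\beta)$ be a feasible point of the SDP (RS) built from the data $D_\Delta=D+\Delta$, and let $K=F_K(L,D_\Delta)=U_\Delta L(X_\Delta L)^{-1}$. (i) If $\Delta=0$, then $\mathcal{J}(K)\le J_{\rm LQR}$ (in particular $A+BK$ is Schur). (ii) For every $\Delta$ with $\|\Delta\|_{\max}\le\epsilon$, the closed-loop matrix $A+BK$ is Schur stable, $\rho(A+BK)<1$.
   Context: $A\in\mathbb{R}^{n\times n}$, $B\in\mathbb{R}^{n\times m}$ unknown; clean data $D=[Z^{\sf T}\ X^{\sf T}\ U^{\sf T}]^{\sf T}$, $Z,X\in\mathbb{R}^{n\times T}$, $U\in\mathbb{R}^{m\times T}$ with $Z=AX+BU$. Perturbation $\Delta\in\mathbb{R}^{(2n+m)\times T}$, $D_\Delta=D+\Delta=[Z_\Delta^{\sf T}\ X_\Delta^{\sf T}\ U_\Delta^{\sf T}]^{\sf T}$; $\|\Delta\|_{\max}$ is the largest absolute entry; $\epsilon>0$, $J_{\rm LQR}>0$. $Q\succeq0$, $R\succ0$ with symmetric positive definite square root $V$. LQR cost: for $K$ with $A+BK$ Schur, $\mathcal{J}(K)=\sum_{i=1}^n\sum_{t\ge0}(x_t^{\sf T}Qx_t+u_t^{\sf T}Ru_t)$ along $x_{t+1}=Ax_t+Bu_t$, $u_t=Kx_t$, $x_0=e_i$ (equivalently ${\rm tr}((Q+K^{\sf T}RK)P^\star)$ with $P^\star=(A+BK)P^\star(A+BK)^{\sf T}+I$); $\mathcal{J}(K)=+\infty$ if $A+BK$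 is not Schur. Define $F(L,S,D_\Delta)={\rm diag}\Big(\begin{bmatrix}S & VU_\Delta L\\ \ast & X_\Delta L\end{bmatrix},\begin{bmatrix}X_\Delta L-I_n & Z_\Delta L\\ \ast & X_\Delta L\end{bmatrix}\Big)$. The SDP (RS) in variables $L\in\mathbb{R}^{T\times n}$, $S\in\mathbb{R}^{m\times m}$, $\alpha,\beta\in\mathbb{R}$ is the feasibility problem: ${\rm tr}(QX_\Delta L)+{\rm tr}(S)\le J_{\rm LQR}$; $F(L,S,D_\Delta)\succeq0$; $$\begin{bmatrix}X_\Delta L-\beta I_n & 0_{n,n} & 0_{n,m} & 0_{n,n}\\ 0_{n,n} & -X_\Delta L & -L^{\sf T}U_\Delta^{\sf T} & 0_{n,n}\\ 0_{m,n} & \ast & 0_{m,m} & U_\Delta L\\ 0_{n,n} & 0_{n,n} & \ast & X_\Delta L\end{bmatrix}-\alpha N_\Delta\succeq0;\quad \alpha\ge0,\ \beta\ge1,$$ where $N_\Delta={\rm diag}\Big(\bar D_\Delta^{\sf T}\begin{bmatrix}\epsilon^2(2n+m)T\,I_{2n+m} & 0\\ 0 & -I_T\end{bmatrix}\bar D_\Delta,\ 0_{n,n}\Big)$ and $\bar D_\Delta=\begin{bmatrix}I_{2n+m}\\ [Z_\Delta^{\sf T}\ \ -X_\Delta^{\sf T}\ \ -U_\Delta^{\sf T}]\end{bmatrix}\in\mathbb{R}^{(2n+m+T)\times(2n+m)}$. In these matrix inequalities, $\ast$ denotes the block determined by symmetry, and $M\succeq0$ requires $M$ to be symmetric (in particular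 $X_\Delta L$ and $S$ are symmetric). *)

theory Defs
  imports "Jordan_Normal_Form.Spectral_Radius" "Jordan_Normal_Form.Gauss_Jordan_Elimination"
    "HOL-Library.Extended_Real"
begin

definition psd :: "real mat \<Rightarrow> bool" where
  "psd M \<longleftrightarrow> M \<in> carrier_mat (dim_row M) (dim_row M) \<and> transpose_mat M = M \<and>
     (\<forall>v \<in> carrier_vec (dim_row M). v \<bullet> (M *\<^sub>v v) \<ge> 0)"

definition pd :: "real mat \<Rightarrow> bool" where
  "pd M \<longleftrightarrow> M \<in> carrier_mat (dim_row M) (dim_row M) \<and> transpose_mat M = M \<and>
     (\<forall>v \<in> carrier_vec (dim_row M). v \<noteq> 0\<^sub>v (dim_row M) \<longrightarrow> v \<bullet> (M *\<^sub>v v) > 0)"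

definition mtrace :: "real mat \<Rightarrow> real" where
  "mtrace M = (\<Sum>i<dim_row M. M $$ (i,i))"

definition minv :: "real mat \<Rightarrow> real mat" where
  "minv M = the (mat_inverse M)"

definition rho :: "real mat \<Rightarrow> real" where
  "rho M = spectral_radius (map_mat complex_of_real M)"

definition schur_stable :: "real mat \<Rightarrow> bool" where
  "schur_stable M \<longleftrightarrow> rho M < 1"

definition max_norm :: "real mat \<Rightarrow> real" where
  "max_norm M = Max (insert 0 {\<bar>M $$ (i,j)\<bar> | i j. i < dim_row M \<and> j < dim_col M})"

definition hcat :: "real mat \<Rightarrow> real mat \<Rightarrow> real mat" where
  "hcat M N = mat (dim_row M) (dim_col M + dim_col N)
     (\<lambda>(i,j). if j < dim_col M then M $$ (i,j) else N $$ (i, j - dim_col M))"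

definition vcat :: "real mat \<Rightarrow> real mat \<Rightarrow> real mat" where
  "vcat M N = mat (dim_row M + dim_row N) (dim_col M)
     (\<lambda>(i,j). if i < dim_row M then M $$ (i,j) else N $$ (i - dim_row M, j))"

definition bdiag :: "real mat \<Rightarrow> real mat \<Rightarrow> real mat" where
  "bdiag M N = four_block_mat M (0\<^sub>m (dim_row M) (dim_col N)) (0\<^sub>m (dim_row N) (dim_col M)) N"

definition row_block :: "real mat \<Rightarrow> nat \<Rightarrow> nat \<Rightarrow> real mat" where
  "row_block M a k = mat k (dim_col M) (\<lambda>(i,j). M $$ (a + i, j))"

definition block4 :: "real mat \<Rightarrow> real mat \<Rightarrow> real mat \<Rightarrow> real mat \<Rightarrow>
                      real mat \<Rightarrow> real mat \<Rightarrow> real mat \<Rightarrow> real mat \<Rightarrow>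
                      real mat \<Rightarrow> real mat \<Rightarrow> real mat \<Rightarrow> real mat \<Rightarrow>
                      real mat \<Rightarrow> real mat \<Rightarrow> real mat \<Rightarrow> real mat \<Rightarrow> real mat" where
  "block4 M11 M12 M13 M14 M21 M22 M23 M24 M31 M32 M33 M34 M41 M42 M43 M44 =
     four_block_mat (four_block_mat M11 M12 M21 M22) (four_block_mat M13 M14 M23 M24)
                    (four_block_mat M31 M32 M41 M42) (four_block_mat M33 M34 M43 M44)"

section \<open>Data blocks of D_Delta = [Z; X; U] (rows 0..n-1, n..2n-1, 2n..2n+m-1)\<close>

definition Zd :: "nat \<Rightarrow> nat \<Rightarrow> real mat \<Rightarrow> real mat" where
  "Zd n m DD = row_block DD 0 n"
definition Xd :: "nat \<Rightarrow> nat \<Rightarrow> real mat \<Rightarrow> real mat" where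
  "Xd n m DD = row_block DD n n"
definition Ud :: "nat \<Rightarrow> nat \<Rightarrow> real mat \<Rightarrow> real mat" where
  "Ud n m DD = row_block DD (2*n) m"

definition lqr_cost :: "nat \<Rightarrow> real mat \<Rightarrow> real mat \<Rightarrow> real mat \<Rightarrow> real mat \<Rightarrow> real mat \<Rightarrow> ereal" where
  "lqr_cost n A B Q R K =
     (if schur_stable (A + B * K) then
        ereal (\<Sum>i<n. \<Sum>t. (let x = ((A + B * K) ^\<^sub>m t) *\<^sub>v unit_vec n i; u = K *\<^sub>v x
                             in x \<bullet> (Q *\<^sub>v x) + u \<bullet> (R *\<^sub>v u)))
      else \<infinity>)"

definition F_mat :: "nat \<Rightarrow> nat \<Rightarrow> real mat \<Rightarrow> real mat \<Rightarrow> real mat \<Rightarrow> real mat \<Rightarrow> real mat" where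
  "F_mat n m V L S DD =
     (let Z = Zd n m DD; X = Xd n m DD; U = Ud n m DD in
      bdiag (four_block_mat S (V * U * L) (transpose_mat (V * U * L)) (X * L))
            (four_block_mat (X * L - 1\<^sub>m n) (Z * L) (transpose_mat (Z * L)) (X * L)))"

definition Dbar :: "nat \<Rightarrow> nat \<Rightarrow> real mat \<Rightarrow> real mat" where
  "Dbar n m DD =
     (let Z = Zd n m DD; X = Xd n m DD; U = Ud n m DD in
      vcat (1\<^sub>m (2*n+m))
           (hcat (transpose_mat Z) (hcat (- transpose_mat X) (- transpose_mat U))))"

definition N_mat :: "nat \<Rightarrow> nat \<Rightarrow> nat \<Rightarrow> real \<Rightarrow> real mat \<Rightarrow> real mat" where
  "N_mat n m T eps DD =
     bdiag (transpose_mat (Dbar n m DD) *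
              bdiag ((eps^2 * real ((2*n+m) * T)) \<cdot>\<^sub>m 1\<^sub>m (2*n+m)) (- 1\<^sub>m T) *
              Dbar n m DD)
           (0\<^sub>m n n)"

definition robust_mat :: "nat \<Rightarrow> nat \<Rightarrow> real mat \<Rightarrow> real \<Rightarrow> real mat \<Rightarrow> real mat" where
  "robust_mat n m L \<beta> DD =
     (let X = Xd n m DD; U = Ud n m DD in
      block4 (X * L - \<beta> \<cdot>\<^sub>m 1\<^sub>m n) (0\<^sub>m n n) (0\<^sub>m n m) (0\<^sub>m n n)
             (0\<^sub>m n n) (- (X * L)) (- (transpose_mat L * transpose_mat U)) (0\<^sub>m n n)
             (0\<^sub>m m n) (- (U * L)) (0\<^sub>m m m) (U * L)
             (0\<^sub>m n n) (0\<^sub>m n n) (transpose_mat (U * L)) (X * L))"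

definition RS_feasible ::
  "nat \<Rightarrow> nat \<Rightarrow> nat \<Rightarrow> real mat \<Rightarrow> real mat \<Rightarrow> real \<Rightarrow> real \<Rightarrow> real mat
     \<Rightarrow> real mat \<Rightarrow> real mat \<Rightarrow> real \<Rightarrow> real \<Rightarrow> bool" where
  "RS_feasible n m T Q V eps J DD L S \<alpha> \<beta> \<longleftrightarrow>
     L \<in> carrier_mat T n \<and> S \<in> carrier_mat m m \<and>
     mtrace (Q * Xd n m DD * L) + mtrace S \<le> J \<and>
     psd (F_mat n m V L S DD) \<and>
     psd (robust_mat n m L \<beta> DD - \<alpha> \<cdot>\<^sub>m N_mat n m T eps DD) \<and>
     \<alpha> \<ge> 0 \<and> \<beta> \<ge> 1"

definition F_K :: "nat \<Rightarrow> nat \<Rightarrow> real mat \<Rightarrow> real mat \<Rightarrow> real mat" where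
  "F_K n m L DD = Ud n m DD * L * minv (Xd n m DD * L)"

end

theory Submission
  imports Defs
begin

(* Feasibility makes P = X_Delta L symmetric with P >= I, hence invertible, and
   K = U_Delta L P^-1 satisfies K P = U_Delta L.  Testing the robust inequality on
   (x, A^T x, B^T x, -K^T B^T x), the multiplier term N_Delta is nonnegative: on noise-free
   data Z^T x = X^T A^T x + U^T B^T x, so the residual of the perturbed data is
   Delta^T (x, -A^T x, -B^T x), which is small when the entries of Delta are.  What remains
   is the Lyapunov inequality P - (A + B K) P (A + B K)^T >= I, and a left eigenvector of
   A + B K shows rho(A + B K) < 1.  For Delta = 0, P dominates every truncated Gramian
   sum_t M^t (M^t)^T of M = A + B K; since the trace of a product of positive semidefinite
   matrices is nonnegative, J(K) <= tr((Q + K^T R K) P), and the Schur complement in the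
   first block of F bounds tr(K^T R K P) by tr S. *)

section \<open>Quadratic forms and block matrices\<close>

lemma mult_mat_zero_vec[simp]:
  "A \<in> carrier_mat nr nc \<Longrightarrow> A *\<^sub>v 0\<^sub>v nc = (0\<^sub>v nr :: 'a :: semiring_0 vec)"
  by (rule eq_vecI) (auto simp: scalar_prod_def)

lemma zero_mat_mult_vec[simp]:
  "v \<in> carrier_vec nc \<Longrightarrow> 0\<^sub>m nr nc *\<^sub>v v = (0\<^sub>v nr :: 'a :: semiring_0 vec)"
  by (rule eq_vecI) (auto simp: scalar_prod_def)

lemma mult_mat_vec_uminus:
  fixes M :: "real mat"
  assumes "M \<in> carrier_mat r c" "v \<in> carrier_vec c"
  shows "M *\<^sub>v (- v) = - (M *\<^sub>v v)"
  by (rule eq_vecI) (use assms in auto)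

lemma smult_mat_mult_vec:
  fixes A :: "real mat"
  assumes "A \<in> carrier_mat nr nc" "v \<in> carrier_vec nc"
  shows "(c \<cdot>\<^sub>m A) *\<^sub>v v = c \<cdot>\<^sub>v (A *\<^sub>v v)"
  by (rule eq_vecI) (use assms in \<open>auto simp: scalar_prod_def sum_distrib_left mult.assoc\<close>)

lemma mult_mat_vec_index_sum:
  assumes "A \<in> carrier_mat r c" "w \<in> carrier_vec c" "j < r"
  shows "(A *\<^sub>v w) $ j = (\<Sum>k<c. A $$ (j,k) * w $ k)"
  using assms by (auto simp: scalar_prod_def lessThan_atLeast0 intro: sum.cong)

lemma mult_mat_unit_vec_index:
  fixes M :: "real mat"
  assumes "M \<in> carrier_mat r n" "i < n" "k < r"
  shows "(M *\<^sub>v unit_vec n i) $ k = M $$ (k,i)"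
  using assms by simp

lemma scalar_prod_self_nonneg: "0 \<le> (v :: real vec) \<bullet> v"
  unfolding scalar_prod_def by (rule sum_nonneg) simp

lemma scalar_prod_self_pos:
  fixes v :: "real vec"
  assumes v: "v \<in> carrier_vec n" and v0: "v \<noteq> 0\<^sub>v n"
  shows "0 < v \<bullet> v"
proof -
  obtain i where i: "i < n" and vi: "v $ i \<noteq> 0"
    using v v0 by (metis dim_vec eq_vecI index_zero_vec carrier_vecD)
  have "0 < (v $ i)^2" using vi by simp
  also have "\<dots> \<le> (\<Sum>j<n. (v $ j)^2)" by (rule member_le_sum) (use i in auto)
  also have "\<dots> = v \<bullet> v" using v by (simp add: scalar_prod_def lessThan_atLeast0 power2_eq_square)
  finally show ?thesis .
qed

lemma quadratic_form_sum:
  fixes M :: "real mat"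
  assumes M: "M \<in> carrier_mat n n" and x: "x \<in> carrier_vec n" and y: "y \<in> carrier_vec n"
  shows "x \<bullet> (M *\<^sub>v y) = (\<Sum>k<n. \<Sum>l<n. x $ k * M $$ (k,l) * y $ l)"
  using M x y
  by (auto simp: scalar_prod_def sum_distrib_left mult.assoc lessThan_atLeast0 intro!: sum.cong)

lemma scalar_prod_mult_vec_sym:
  fixes P :: "real mat"
  assumes P: "P \<in> carrier_mat n n" and Ps: "transpose_mat P = P"
    and u: "u \<in> carrier_vec n" and w: "w \<in> carrier_vec n"
  shows "w \<bullet> (P *\<^sub>v u) = u \<bullet> (P *\<^sub>v w)"
proof -
  have "w \<bullet> (P *\<^sub>v u) = (P *\<^sub>v w) \<bullet> u"
    using transpose_vec_mult_scalar[OF P u w] Ps by simp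
  also have "\<dots> = u \<bullet> (P *\<^sub>v w)" using P u w by (intro comm_scalar_prod[of _ n]) auto
  finally show ?thesis .
qed

lemma quadratic_form_lincomb:
  fixes P :: "real mat"
  assumes P: "P \<in> carrier_mat n n" and Ps: "transpose_mat P = P"
    and u: "u \<in> carrier_vec n" and w: "w \<in> carrier_vec n"
  shows "(a \<cdot>\<^sub>v u + b \<cdot>\<^sub>v w) \<bullet> (P *\<^sub>v (a \<cdot>\<^sub>v u + b \<cdot>\<^sub>v w)) =
     a^2 * (u \<bullet> (P *\<^sub>v u)) + 2 * a * b * (u \<bullet> (P *\<^sub>v w)) + b^2 * (w \<bullet> (P *\<^sub>v w))"
proof -
  have "(a \<cdot>\<^sub>v u + b \<cdot>\<^sub>v w) \<bullet> (P *\<^sub>v (a \<cdot>\<^sub>v u + b \<cdot>\<^sub>v w)) =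
     a * a * (u \<bullet> (P *\<^sub>v u)) + a * b * (u \<bullet> (P *\<^sub>v w)) + b * a * (w \<bullet> (P *\<^sub>v u))
       + b * b * (w \<bullet> (P *\<^sub>v w))"
    using P u w
    by (simp add: mult_add_distrib_mat_vec[of P n n] mult_mat_vec[of P n n]
        scalar_prod_add_distrib[of _ n] add_scalar_prod_distrib[of _ n] algebra_simps)
  then show ?thesis
    using scalar_prod_mult_vec_sym[OF P Ps u w] by (simp add: power2_eq_square algebra_simps)
qed

lemma quadratic_form_gram:
  fixes C :: "real mat"
  assumes C: "C \<in> carrier_mat m n" and x: "x \<in> carrier_vec n"
  shows "x \<bullet> ((transpose_mat C * C) *\<^sub>v x) = (C *\<^sub>v x) \<bullet> (C *\<^sub>v x)"
proof -
  have Cx: "C *\<^sub>v x \<in> carrier_vec m" using C x by simp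
  have "x \<bullet> ((transpose_mat C * C) *\<^sub>v x) = (transpose_mat C *\<^sub>v (C *\<^sub>v x)) \<bullet> x"
    using C x by (subst comm_scalar_prod[of _ n]) auto
  also have "\<dots> = (C *\<^sub>v x) \<bullet> (C *\<^sub>v x)" by (rule transpose_vec_mult_scalar[OF C x Cx])
  finally show ?thesis .
qed

lemma sum_mult_square_le:
  fixes a b :: "nat \<Rightarrow> real"
  shows "(\<Sum>i\<in>I. a i * b i)^2 \<le> (\<Sum>i\<in>I. (a i)^2) * (\<Sum>i\<in>I. (b i)^2)"
proof (cases "(\<Sum>i\<in>I. (b i)^2) > 0")
  case False
  show ?thesis
  proof (cases "finite I")
    case fin: True
    have "(\<Sum>i\<in>I. (b i)^2) = 0" using False sum_nonneg[of I "\<lambda>i. (b i)^2"] by simp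
    hence "\<forall>i\<in>I. b i = 0" using fin sum_nonneg_eq_0_iff[of I "\<lambda>i. (b i)^2"] by simp
    then show ?thesis by simp
  qed simp
next
  case True
  define s where "s = (\<Sum>i\<in>I. (b i)^2)"
  define r where "r = (\<Sum>i\<in>I. a i * b i) / s"
  have "0 \<le> (\<Sum>i\<in>I. (a i - r * b i)^2)" by (rule sum_nonneg) simp
  also have "\<dots> = (\<Sum>i\<in>I. (a i)^2 - 2 * r * (a i * b i) + r^2 * (b i)^2)"
    by (rule sum.cong) (auto simp: power2_eq_square algebra_simps)
  also have "\<dots> = (\<Sum>i\<in>I. (a i)^2) - 2 * r * (\<Sum>i\<in>I. a i * b i) + r^2 * s"
    unfolding s_def by (simp add: sum.distrib sum_subtractf sum_distrib_left)
  also have "\<dots> = (\<Sum>i\<in>I. (a i)^2) - (\<Sum>i\<in>I. a i * b i)^2 / s"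
    by (simp add: r_def power2_eq_square)
  finally show ?thesis using True unfolding s_def by (simp add: pos_divide_le_eq)
qed

lemma mult_mat_vec_square_le_max_entry:
  fixes M :: "real mat"
  assumes M: "M \<in> carrier_mat r c" and entries: "\<And>i j. i < r \<Longrightarrow> j < c \<Longrightarrow> \<bar>M $$ (i,j)\<bar> \<le> eps"
    and v: "v \<in> carrier_vec c"
  shows "(M *\<^sub>v v) \<bullet> (M *\<^sub>v v) \<le> eps^2 * real (r * c) * (v \<bullet> v)"
proof -
  have vv: "v \<bullet> v = (\<Sum>k<c. (v $ k)^2)"
    using v by (simp add: scalar_prod_def lessThan_atLeast0 power2_eq_square)
  have row: "((M *\<^sub>v v) $ i)^2 \<le> real c * eps^2 * (v \<bullet> v)" if i: "i < r" for i
  proof -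
    have "((M *\<^sub>v v) $ i)^2 \<le> (\<Sum>k<c. (M $$ (i,k))^2) * (\<Sum>k<c. (v $ k)^2)"
      unfolding mult_mat_vec_index_sum[OF M v i] by (rule sum_mult_square_le)
    also have "\<dots> \<le> (\<Sum>k<c. eps^2) * (v \<bullet> v)"
      unfolding vv[symmetric]
    proof (rule mult_right_mono)
      show "(\<Sum>k<c. (M $$ (i,k))^2) \<le> (\<Sum>k<c. eps^2)"
      proof (rule sum_mono)
        fix k assume "k \<in> {..<c}"
        then have "\<bar>M $$ (i,k)\<bar>^2 \<le> eps^2" using entries[OF i] by (intro power_mono) auto
        then show "(M $$ (i,k))^2 \<le> eps^2" by simp
      qed
    qed (rule scalar_prod_self_nonneg)
    finally show ?thesis by simp
  qed
  have "(M *\<^sub>v v) \<bullet> (M *\<^sub>v v) = (\<Sum>i<r. ((M *\<^sub>v v) $ i)^2)"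
    using M by (simp add: scalar_prod_def lessThan_atLeast0 power2_eq_square)
  also have "\<dots> \<le> (\<Sum>i<r. real c * eps^2 * (v \<bullet> v))" by (rule sum_mono) (use row in simp)
  also have "\<dots> = eps^2 * real (r * c) * (v \<bullet> v)" by simp
  finally show ?thesis .
qed

lemma max_norm_entry_le:
  fixes D :: "real mat"
  assumes D: "D \<in> carrier_mat r c" and mn: "max_norm D \<le> eps" and "i < r" "j < c"
  shows "\<bar>D $$ (i,j)\<bar> \<le> eps"
proof -
  let ?S = "{\<bar>D $$ (i,j)\<bar> | i j. i < dim_row D \<and> j < dim_col D}"
  have "?S = (\<lambda>(i,j). \<bar>D $$ (i,j)\<bar>) ` ({..<dim_row D} \<times> {..<dim_col D})" by auto
  hence "finite (insert 0 ?S)" by simp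
  moreover have "\<bar>D $$ (i,j)\<bar> \<in> insert 0 ?S" using assms by auto
  ultimately have "\<bar>D $$ (i,j)\<bar> \<le> Max (insert 0 ?S)" by (rule Max_ge)
  then show ?thesis using mn unfolding max_norm_def by simp
qed

lemma append_vec_assoc: "(u @\<^sub>v v) @\<^sub>v w = u @\<^sub>v (v @\<^sub>v w)"
  by (rule eq_vecI) (auto simp: nth_append algebra_simps)

lemma hcat_carrier[simp]:
  "M \<in> carrier_mat r c1 \<Longrightarrow> N \<in> carrier_mat r c2 \<Longrightarrow> hcat M N \<in> carrier_mat r (c1 + c2)"
  unfolding hcat_def by auto

lemma vcat_carrier[simp]:
  "M \<in> carrier_mat r1 c \<Longrightarrow> N \<in> carrier_mat r2 c \<Longrightarrow> vcat M N \<in> carrier_mat (r1 + r2) c"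
  unfolding vcat_def by auto

lemma hcat_mult_append_vec:
  fixes M N :: "real mat"
  assumes M: "M \<in> carrier_mat r c1" and N: "N \<in> carrier_mat r c2"
    and u: "u \<in> carrier_vec c1" and w: "w \<in> carrier_vec c2"
  shows "hcat M N *\<^sub>v (u @\<^sub>v w) = M *\<^sub>v u + N *\<^sub>v w"
proof (rule eq_vecI)
  fix i assume "i < dim_vec (M *\<^sub>v u + N *\<^sub>v w)"
  hence i: "i < r" using N by simp
  have "row (hcat M N) i = row M i @\<^sub>v row N i"
    by (rule eq_vecI) (use M N i in \<open>auto simp: hcat_def\<close>)
  then show "(hcat M N *\<^sub>v (u @\<^sub>v w)) $ i = (M *\<^sub>v u + N *\<^sub>v w) $ i"
    using M N u w i by (simp add: hcat_def scalar_prod_append[of _ c1 _ c2])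
qed (use M N in \<open>simp add: hcat_def\<close>)

lemma vcat_mult_vec:
  fixes M N :: "real mat"
  assumes M: "M \<in> carrier_mat r1 c" and N: "N \<in> carrier_mat r2 c" and v: "v \<in> carrier_vec c"
  shows "vcat M N *\<^sub>v v = (M *\<^sub>v v) @\<^sub>v (N *\<^sub>v v)"
  by (rule eq_vecI) (use M N v in \<open>auto simp: vcat_def scalar_prod_def\<close>)

lemma transpose_vcat:
  "transpose_mat (vcat M N) = hcat (transpose_mat M) (transpose_mat N)"
  if "dim_col M = dim_col N"
  by (rule eq_matI) (use that in \<open>auto simp: vcat_def hcat_def\<close>)

lemma scalar_prod_four_block_mat_mult_vec:
  fixes A B C D :: "real mat"
  assumes A: "A \<in> carrier_mat r1 c1" and B: "B \<in> carrier_mat r1 c2"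
    and C: "C \<in> carrier_mat r2 c1" and D: "D \<in> carrier_mat r2 c2"
    and a: "a \<in> carrier_vec r1" and b: "b \<in> carrier_vec r2"
    and c: "c \<in> carrier_vec c1" and d: "d \<in> carrier_vec c2"
  shows "(a @\<^sub>v b) \<bullet> (four_block_mat A B C D *\<^sub>v (c @\<^sub>v d)) =
         a \<bullet> (A *\<^sub>v c) + a \<bullet> (B *\<^sub>v d) + b \<bullet> (C *\<^sub>v c) + b \<bullet> (D *\<^sub>v d)"
  using A B C D a b c d
  by (simp add: four_block_mat_mult_vec[OF A B C D c d] scalar_prod_append[of _ r1 _ r2]
      scalar_prod_add_distrib[of _ r1] scalar_prod_add_distrib[of _ r2])

lemma scalar_prod_block4_mult_vec:
  fixes M11 M12 M13 M14 M21 M22 M23 M24 M31 M32 M33 M34 M41 M42 M43 M44 :: "real mat"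
  assumes c: "M11 \<in> carrier_mat n1 n1" "M12 \<in> carrier_mat n1 n2" "M13 \<in> carrier_mat n1 n3" "M14 \<in> carrier_mat n1 n4"
   "M21 \<in> carrier_mat n2 n1" "M22 \<in> carrier_mat n2 n2" "M23 \<in> carrier_mat n2 n3" "M24 \<in> carrier_mat n2 n4"
   "M31 \<in> carrier_mat n3 n1" "M32 \<in> carrier_mat n3 n2" "M33 \<in> carrier_mat n3 n3" "M34 \<in> carrier_mat n3 n4"
   "M41 \<in> carrier_mat n4 n1" "M42 \<in> carrier_mat n4 n2" "M43 \<in> carrier_mat n4 n3" "M44 \<in> carrier_mat n4 n4"
   and x: "x1 \<in> carrier_vec n1" "x2 \<in> carrier_vec n2" "x3 \<in> carrier_vec n3" "x4 \<in> carrier_vec n4"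
  shows "((x1 @\<^sub>v x2) @\<^sub>v (x3 @\<^sub>v x4)) \<bullet>
     (block4 M11 M12 M13 M14 M21 M22 M23 M24 M31 M32 M33 M34 M41 M42 M43 M44 *\<^sub>v ((x1 @\<^sub>v x2) @\<^sub>v (x3 @\<^sub>v x4)))
   = x1 \<bullet> (M11 *\<^sub>v x1) + x1 \<bullet> (M12 *\<^sub>v x2) + x1 \<bullet> (M13 *\<^sub>v x3) + x1 \<bullet> (M14 *\<^sub>v x4)
   + x2 \<bullet> (M21 *\<^sub>v x1) + x2 \<bullet> (M22 *\<^sub>v x2) + x2 \<bullet> (M23 *\<^sub>v x3) + x2 \<bullet> (M24 *\<^sub>v x4)
   + x3 \<bullet> (M31 *\<^sub>v x1) + x3 \<bullet> (M32 *\<^sub>v x2) + x3 \<bullet> (M33 *\<^sub>v x3) + x3 \<bullet> (M34 *\<^sub>v x4)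
   + x4 \<bullet> (M41 *\<^sub>v x1) + x4 \<bullet> (M42 *\<^sub>v x2) + x4 \<bullet> (M43 *\<^sub>v x3) + x4 \<bullet> (M44 *\<^sub>v x4)"
proof -
  have b: "four_block_mat M11 M12 M21 M22 \<in> carrier_mat (n1+n2) (n1+n2)"
    "four_block_mat M13 M14 M23 M24 \<in> carrier_mat (n1+n2) (n3+n4)"
    "four_block_mat M31 M32 M41 M42 \<in> carrier_mat (n3+n4) (n1+n2)"
    "four_block_mat M33 M34 M43 M44 \<in> carrier_mat (n3+n4) (n3+n4)" using c by auto
  have v: "x1 @\<^sub>v x2 \<in> carrier_vec (n1+n2)" "x3 @\<^sub>v x4 \<in> carrier_vec (n3+n4)" using x by auto
  show ?thesis unfolding block4_def
    by (simp add: scalar_prod_four_block_mat_mult_vec[OF b v v]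
        scalar_prod_four_block_mat_mult_vec[OF c(1,2,5,6) x(1,2) x(1,2)]
        scalar_prod_four_block_mat_mult_vec[OF c(3,4,7,8) x(1,2) x(3,4)]
        scalar_prod_four_block_mat_mult_vec[OF c(9,10,13,14) x(3,4) x(1,2)]
        scalar_prod_four_block_mat_mult_vec[OF c(11,12,15,16) x(3,4) x(3,4)])
qed

lemma psd_four_block_mat:
  fixes A B C D :: "real mat"
  assumes psd: "psd (four_block_mat A B C D)"
    and A: "A \<in> carrier_mat n1 n1" and B: "B \<in> carrier_mat n1 n2"
    and C: "C \<in> carrier_mat n2 n1" and D: "D \<in> carrier_mat n2 n2"
  shows "psd A" and "psd D"
    and "\<And>u v. u \<in> carrier_vec n1 \<Longrightarrow> v \<in> carrier_vec n2 \<Longrightarrow>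
           0 \<le> u \<bullet> (A *\<^sub>v u) + u \<bullet> (B *\<^sub>v v) + v \<bullet> (C *\<^sub>v u) + v \<bullet> (D *\<^sub>v v)"
proof -
  let ?M = "four_block_mat A B C D"
  have M: "?M \<in> carrier_mat (n1 + n2) (n1 + n2)" using A B C D by simp
  have sym: "?M $$ (i, j) = ?M $$ (j, i)" if "i < n1 + n2" "j < n1 + n2" for i j
    using psd M that unfolding psd_def by (metis carrier_matD index_transpose_mat(1))
  show quad: "0 \<le> u \<bullet> (A *\<^sub>v u) + u \<bullet> (B *\<^sub>v v) + v \<bullet> (C *\<^sub>v u) + v \<bullet> (D *\<^sub>v v)"
    if u: "u \<in> carrier_vec n1" and v: "v \<in> carrier_vec n2" for u v
  proof -
    have "0 \<le> (u @\<^sub>v v) \<bullet> (?M *\<^sub>v (u @\<^sub>v v))" using psd M u v unfolding psd_def by auto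
    then show ?thesis using scalar_prod_four_block_mat_mult_vec[OF A B C D u v u v] by simp
  qed
  show "psd A" unfolding psd_def
  proof (intro conjI ballI)
    show "transpose_mat A = A"
    proof (rule eq_matI)
      fix i j assume "i < dim_row A" "j < dim_col A"
      then show "transpose_mat A $$ (i, j) = A $$ (i, j)" using sym[of j i] A B C D by simp
    qed (use A in auto)
    fix u :: "real vec" assume "u \<in> carrier_vec (dim_row A)"
    then show "0 \<le> u \<bullet> (A *\<^sub>v u)" using quad[of u "0\<^sub>v n2"] A B C D by auto
  qed (use A in auto)
  show "psd D" unfolding psd_def
  proof (intro conjI ballI)
    show "transpose_mat D = D"
    proof (rule eq_matI)
      fix i j assume "i < dim_row D" "j < dim_col D"
      then show "transpose_mat D $$ (i, j) = D $$ (i, j)"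
        using sym[of "n1 + j" "n1 + i"] A B C D by simp
    qed (use D in auto)
    fix v :: "real vec" assume "v \<in> carrier_vec (dim_row D)"
    then show "0 \<le> v \<bullet> (D *\<^sub>v v)" using quad[of "0\<^sub>v n1" v] A B C D by auto
  qed (use D in auto)
qed

text \<open>Evaluating the block form at (u, - H u).\<close>
lemma psd_four_block_schur_complement:
  fixes S H P :: "real mat"
  assumes psd: "psd (four_block_mat S (transpose_mat H * P) (transpose_mat (transpose_mat H * P)) P)"
    and S: "S \<in> carrier_mat m m" and H: "H \<in> carrier_mat n m" and P: "P \<in> carrier_mat n n"
    and u: "u \<in> carrier_vec m"
  shows "(H *\<^sub>v u) \<bullet> (P *\<^sub>v (H *\<^sub>v u)) \<le> u \<bullet> (S *\<^sub>v u)"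
proof -
  define G where "G = transpose_mat H * P"
  have G: "G \<in> carrier_mat m n" unfolding G_def using H P by simp
  define c where "c = H *\<^sub>v u"
  have c: "c \<in> carrier_vec n" unfolding c_def using H u by simp
  define v where "v = (-1) \<cdot>\<^sub>v c"
  have v: "v \<in> carrier_vec n" unfolding v_def using c by simp
  have GT: "transpose_mat G \<in> carrier_mat n m" using G by simp
  note blocks = psd_four_block_mat[OF psd[folded G_def] S G GT P]
  have Ps: "transpose_mat P = P" using blocks(2) G unfolding psd_def by auto
  have uG: "u \<bullet> (G *\<^sub>v w) = c \<bullet> (P *\<^sub>v w)" if w: "w \<in> carrier_vec n" for w
  proof -
    have Pw: "P *\<^sub>v w \<in> carrier_vec n" using P w by simp
    have "u \<bullet> (G *\<^sub>v w) = (transpose_mat H *\<^sub>v (P *\<^sub>v w)) \<bullet> u"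
      unfolding G_def using H P u w by (subst comm_scalar_prod[of _ m]) auto
    also have "\<dots> = c \<bullet> (P *\<^sub>v w)"
      unfolding c_def using transpose_vec_mult_scalar[OF H u Pw] H u Pw
      by (subst comm_scalar_prod[of _ n]) auto
    finally show ?thesis .
  qed
  have vGu: "v \<bullet> (transpose_mat G *\<^sub>v u) = u \<bullet> (G *\<^sub>v v)"
    using transpose_vec_mult_scalar[OF G v u] G u v by (subst comm_scalar_prod[of _ n]) auto
  have "0 \<le> u \<bullet> (S *\<^sub>v u) + u \<bullet> (G *\<^sub>v v) + v \<bullet> (transpose_mat G *\<^sub>v u) + v \<bullet> (P *\<^sub>v v)"
    by (rule blocks(3)[OF u v])
  also have "\<dots> = u \<bullet> (S *\<^sub>v u) - c \<bullet> (P *\<^sub>v c)"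
    unfolding vGu uG[OF v] unfolding v_def using P c
    by (simp add: mult_mat_vec[of _ n n] smult_scalar_prod_distrib[of _ n])
  finally show ?thesis unfolding c_def by simp
qed

lemma mtrace_mult:
  fixes Q P :: "real mat"
  assumes Q: "Q \<in> carrier_mat n n" and P: "P \<in> carrier_mat n n"
  shows "mtrace (Q * P) = (\<Sum>k<n. \<Sum>l<n. Q $$ (k,l) * P $$ (l,k))"
  unfolding mtrace_def using Q P by (auto simp: scalar_prod_def lessThan_atLeast0 intro!: sum.cong)

lemma mtrace_mult_gram:
  fixes H P :: "real mat"
  assumes H: "H \<in> carrier_mat n m" and P: "P \<in> carrier_mat n n" and Ps: "transpose_mat P = P"
  shows "mtrace (H * transpose_mat H * P) = (\<Sum>r<m. (H *\<^sub>v unit_vec m r) \<bullet> (P *\<^sub>v (H *\<^sub>v unit_vec m r)))"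
proof -
  have HH: "H * transpose_mat H \<in> carrier_mat n n" using H by simp
  have Psym: "P $$ (l,k) = P $$ (k,l)" if "k < n" "l < n" for k l
    using Ps P that by (metis carrier_matD index_transpose_mat(1))
  have "mtrace (H * transpose_mat H * P) = (\<Sum>k<n. \<Sum>l<n. \<Sum>r<m. H $$ (k,r) * P $$ (k,l) * H $$ (l,r))"
    unfolding mtrace_mult[OF HH P] using H Psym
    by (auto simp: scalar_prod_def lessThan_atLeast0 sum_distrib_left mult.commute mult.left_commute
        intro!: sum.cong)
  also have "\<dots> = (\<Sum>r<m. \<Sum>k<n. \<Sum>l<n. H $$ (k,r) * P $$ (k,l) * H $$ (l,r))"
    by (simp add: sum.swap[of _ "{..<m}"])
  also have "\<dots> = (\<Sum>r<m. (H *\<^sub>v unit_vec m r) \<bullet> (P *\<^sub>v (H *\<^sub>v unit_vec m r)))"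
    using H by (auto simp: quadratic_form_sum[OF P] mult_mat_unit_vec_index[OF H] intro!: sum.cong)
  finally show ?thesis .
qed

lemma psd_four_block_schur_trace_le:
  fixes S H P :: "real mat"
  assumes psd: "psd (four_block_mat S (transpose_mat H * P) (transpose_mat (transpose_mat H * P)) P)"
    and S: "S \<in> carrier_mat m m" and H: "H \<in> carrier_mat n m" and P: "P \<in> carrier_mat n n"
  shows "mtrace (H * transpose_mat H * P) \<le> mtrace S"
proof -
  have Ps: "transpose_mat P = P"
    using psd_four_block_mat(2)[OF psd S _ _ P] H P unfolding psd_def by auto
  have "mtrace (H * transpose_mat H * P) = (\<Sum>r<m. (H *\<^sub>v unit_vec m r) \<bullet> (P *\<^sub>v (H *\<^sub>v unit_vec m r)))"
    by (rule mtrace_mult_gram[OF H P Ps])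
  also have "\<dots> \<le> (\<Sum>r<m. unit_vec m r \<bullet> (S *\<^sub>v unit_vec m r))"
    by (rule sum_mono) (use psd_four_block_schur_complement[OF psd S H P] in simp)
  also have "\<dots> = mtrace S" unfolding mtrace_def using S by simp
  finally show ?thesis .
qed

lemma psd_minus_one_imp_det_nonzero:
  fixes P :: "real mat"
  assumes P: "P \<in> carrier_mat n n" and psd: "psd (P - 1\<^sub>m n)"
  shows "det P \<noteq> 0"
proof
  assume "det P = 0"
  then obtain v where v: "v \<in> carrier_vec n" and v0: "v \<noteq> 0\<^sub>v n" and Pv: "P *\<^sub>v v = 0\<^sub>v n"
    using det_0_iff_vec_prod_zero[OF P] by auto
  have "0 \<le> v \<bullet> ((P - 1\<^sub>m n) *\<^sub>v v)" using psd P v unfolding psd_def by auto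
  also have "\<dots> = - (v \<bullet> v)"
    using P v Pv by (simp add: minus_mult_distrib_mat_vec[of _ n n] scalar_prod_minus_distrib[of _ n])
  finally show False using scalar_prod_self_pos[OF v v0] by simp
qed

section \<open>Nonnegativity of the trace of a product of positive semidefinite matrices\<close>

definition quad_form :: "nat \<Rightarrow> (nat \<Rightarrow> nat \<Rightarrow> real) \<Rightarrow> (nat \<Rightarrow> real) \<Rightarrow> real" where
  "quad_form n W x = (\<Sum>i<n. \<Sum>j<n. x i * W i j * x j)"

lemma quad_form_mat:
  fixes M :: "real mat"
  assumes "M \<in> carrier_mat n n"
  shows "quad_form n (\<lambda>i j. M $$ (i,j)) x = vec n x \<bullet> (M *\<^sub>v vec n x)"
  using quadratic_form_sum[OF assms, of "vec n x" "vec n x"] unfolding quad_form_def by simp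

lemma sum_indicator_mult:
  assumes "j0 < (n::nat)"
  shows "(\<Sum>i<n. (if i = j0 then t else 0) * g i) = t * (g j0 :: real)"
proof -
  have "(\<Sum>i<n. (if i = j0 then t else 0) * g i) = (\<Sum>i<n. if i = j0 then t * g i else 0)"
    by (rule sum.cong) auto
  also have "\<dots> = t * g j0" using assms by simp
  finally show ?thesis .
qed

lemma quad_form_shift:
  assumes sym: "\<forall>i<n. \<forall>j<n. W i j = W j i" and j0: "j0 < n"
  shows "quad_form n W (\<lambda>i. x i - (if i = j0 then t else 0)) =
         quad_form n W x - 2 * t * (\<Sum>l<n. W j0 l * x l) + t^2 * W j0 j0"
proof -
  let ?d = "\<lambda>i::nat. if i = j0 then t else (0::real)"
  have expand: "(x i - ?d i) * W i j * (x j - ?d j) =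
      x i * W i j * x j - ?d i * (W i j * x j) - ?d j * (x i * W i j) + ?d i * (?d j * W i j)"
    for i j by (simp add: algebra_simps)
  have s1: "(\<Sum>i<n. \<Sum>j<n. ?d i * (W i j * x j)) = t * (\<Sum>l<n. W j0 l * x l)"
    using j0 by (simp add: sum_distrib_left[symmetric] sum_indicator_mult)
  have "(\<Sum>i<n. \<Sum>j<n. ?d j * (x i * W i j)) = (\<Sum>i<n. t * (x i * W i j0))"
    using j0 by (simp add: sum_indicator_mult)
  also have "\<dots> = t * (\<Sum>l<n. W j0 l * x l)"
    using sym j0 by (simp add: sum_distrib_left mult.commute)
  finally have s2: "(\<Sum>i<n. \<Sum>j<n. ?d j * (x i * W i j)) = t * (\<Sum>l<n. W j0 l * x l)" .
  have s3: "(\<Sum>i<n. \<Sum>j<n. ?d i * (?d j * W i j)) = t^2 * W j0 j0"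
    using j0 by (simp add: sum_distrib_left[symmetric] sum_indicator_mult power2_eq_square)
  show ?thesis unfolding quad_form_def
    by (simp only: expand sum.distrib sum_subtractf s1 s2 s3)
qed

text \<open>A nonnegative quadratic form t^2 d - 2 t s + c with d = 0 forces s = 0.\<close>
lemma psd_zero_diag_imp_zero_row:
  assumes sym: "\<forall>i<n. \<forall>j<n. W i j = W j i" and psd: "\<And>x. 0 \<le> quad_form n W x"
    and j0: "j0 < n" and d0: "W j0 j0 = 0" and l: "l < n"
  shows "W j0 l = 0"
proof -
  define e where "e = (\<lambda>i. if i = l then 1 else 0 :: real)"
  define c where "c = quad_form n W e"
  have row: "(\<Sum>l'<n. W j0 l' * e l') = W j0 l"
    using sum_indicator_mult[OF l, of 1 "W j0"] unfolding e_def by (simp add: mult.commute)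
  have "0 \<le> c - 2 * t * W j0 l" for t
  proof -
    have "0 \<le> quad_form n W (\<lambda>i. e i - (if i = j0 then t else 0))" by (rule psd)
    then show ?thesis unfolding quad_form_shift[OF sym j0] c_def row d0 by simp
  qed
  from this[of "(c + 1) / (2 * W j0 l)"] show ?thesis by (cases "W j0 l = 0") (simp_all add: field_simps)
qed

text \<open>One step of symmetric Gaussian elimination: pivoting on a positive diagonal entry d
  subtracts the rank-one matrix w w^T / d (w the pivot row) and keeps the form nonnegative.\<close>
lemma psd_eliminate_pivot:
  assumes sym: "\<forall>i<n. \<forall>j<n. W i j = W j i" and psd: "\<And>x. 0 \<le> quad_form n W x"
    and j0: "j0 < n" and d: "0 < W j0 j0"
  shows "0 \<le> quad_form n (\<lambda>i l. W i l - W i j0 * W j0 l / W j0 j0) x"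
proof -
  define s where "s = (\<Sum>l<n. W j0 l * x l)"
  have "quad_form n (\<lambda>i l. W i l - W i j0 * W j0 l / W j0 j0) x =
        quad_form n W x - (\<Sum>i<n. W j0 i * x i) * s / W j0 j0"
    unfolding quad_form_def s_def using sym j0
    by (simp add: algebra_simps sum_subtractf sum_distrib_left sum_distrib_right sum_divide_distrib)
  also have "\<dots> = quad_form n W x - 2 * (s / W j0 j0) * s + (s / W j0 j0)^2 * W j0 j0"
    using d unfolding s_def by (simp add: field_simps power2_eq_square)
  also have "\<dots> = quad_form n W (\<lambda>i. x i - (if i = j0 then s / W j0 j0 else 0))"
    unfolding s_def by (rule quad_form_shift[OF sym j0, symmetric])
  finally show ?thesis using psd by simp
qed

text \<open>Induction on the number k of trailing rows and columns in which W may be nonzero: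
  pivoting on the first of them removes it, and the subtracted rank-one part w w^T / d
  contributes w^T Q w / d \<ge> 0 to the trace.\<close>
lemma trace_psd_mult_nonneg_aux:
  assumes Q: "\<And>x. 0 \<le> quad_form n Q x"
  shows "k \<le> n \<Longrightarrow> \<forall>i<n. \<forall>j<n. W i j = W j i \<Longrightarrow> \<forall>x. 0 \<le> quad_form n W x \<Longrightarrow>
     \<forall>i<n. \<forall>j<n. (i < n - k \<or> j < n - k) \<longrightarrow> W i j = 0 \<Longrightarrow>
     0 \<le> (\<Sum>i<n. \<Sum>j<n. Q i j * W j i)"
proof (induction k arbitrary: W)
  case 0
  then show ?case by simp
next
  case (Suc k)
  define j0 where "j0 = n - Suc k"
  have j0: "j0 < n" and nk: "n - k = Suc j0" using Suc.prems(1) unfolding j0_def by auto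
  note sym = Suc.prems(2) and psd = Suc.prems(3)[rule_format]
  have zero: "W i j = 0" if "i < n" "j < n" "i < j0 \<or> j < j0" for i j
    using Suc.prems(4) that unfolding j0_def by auto
  have d0: "0 \<le> W j0 j0"
  proof -
    have "0 \<le> quad_form n W (\<lambda>i. 0 - (if i = j0 then -1 else 0))" by (rule psd)
    then show ?thesis unfolding quad_form_shift[OF sym j0] by (simp add: quad_form_def)
  qed
  show ?case
  proof (cases "W j0 j0 = 0")
    case True
    have row: "W j0 l = 0" if "l < n" for l
      using psd_zero_diag_imp_zero_row[OF sym _ j0 True that] psd by blast
    show ?thesis
    proof (rule Suc.IH)
      show "\<forall>i<n. \<forall>j<n. (i < n - k \<or> j < n - k) \<longrightarrow> W i j = 0"
        using zero row sym nk by (metis less_Suc_eq not_less)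
    qed (use Suc.prems sym psd in auto)
  next
    case False
    define d where "d = W j0 j0"
    have d: "0 < d" using d0 False unfolding d_def by simp
    define W' where "W' = (\<lambda>i l. W i l - W i j0 * W j0 l / d)"
    have IH: "0 \<le> (\<Sum>i<n. \<Sum>j<n. Q i j * W' j i)"
    proof (rule Suc.IH)
      show "\<forall>i<n. \<forall>j<n. W' i j = W' j i" using sym j0 unfolding W'_def by (auto simp: mult.commute)
      show "\<forall>x. 0 \<le> quad_form n W' x"
        using psd_eliminate_pivot[OF sym _ j0] psd d unfolding W'_def d_def by blast
      show "\<forall>i<n. \<forall>j<n. (i < n - k \<or> j < n - k) \<longrightarrow> W' i j = 0"
        using zero sym nk d j0 unfolding W'_def d_def by (auto simp: less_Suc_eq)
    qed (use Suc.prems in auto)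
    have "(\<Sum>i<n. \<Sum>j<n. Q i j * W j i) =
        (\<Sum>i<n. \<Sum>j<n. Q i j * W' j i + Q i j * (W j j0 * W j0 i / d))"
      unfolding W'_def by (simp add: algebra_simps)
    also have "\<dots> = (\<Sum>i<n. \<Sum>j<n. Q i j * W' j i) + (\<Sum>i<n. \<Sum>j<n. Q i j * (W j j0 * W j0 i / d))"
      by (simp add: sum.distrib)
    also have "(\<Sum>i<n. \<Sum>j<n. Q i j * (W j j0 * W j0 i / d)) = quad_form n Q (\<lambda>i. W j0 i) / d"
      unfolding quad_form_def using sym j0 by (simp add: sum_divide_distrib algebra_simps)
    finally show ?thesis using IH Q[of "\<lambda>i. W j0 i"] d by simp
  qed
qed

lemma trace_psd_mult_nonneg:
  assumes "\<And>x. 0 \<le> quad_form n Q x" "\<forall>i<n. \<forall>j<n. W i j = W j i" "\<And>x. 0 \<le> quad_form n W x"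
  shows "0 \<le> (\<Sum>i<n. \<Sum>j<n. Q i j * W j i)"
  using trace_psd_mult_nonneg_aux[of n Q n W] assms by auto

section \<open>Lyapunov certificates and the LQR cost\<close>

definition lyapunov_certificate :: "real mat \<Rightarrow> real mat \<Rightarrow> bool" where
  "lyapunov_certificate M P \<longleftrightarrow> psd P \<and>
     (\<forall>x \<in> carrier_vec (dim_row P).
        x \<bullet> x \<le> x \<bullet> (P *\<^sub>v x) - (transpose_mat M *\<^sub>v x) \<bullet> (P *\<^sub>v (transpose_mat M *\<^sub>v x)))"

lemma lyapunov_certificateD:
  assumes "lyapunov_certificate M P" and "P \<in> carrier_mat n n"
  shows "transpose_mat P = P" and "\<And>x. x \<in> carrier_vec n \<Longrightarrow> 0 \<le> x \<bullet> (P *\<^sub>v x)"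
    and "\<And>x. x \<in> carrier_vec n \<Longrightarrow>
           x \<bullet> x \<le> x \<bullet> (P *\<^sub>v x) - (transpose_mat M *\<^sub>v x) \<bullet> (P *\<^sub>v (transpose_mat M *\<^sub>v x))"
  using assms unfolding lyapunov_certificate_def psd_def by auto

lemma eigenvector_Re_Im_mult_vec:
  fixes M :: "real mat" and v :: "complex vec"
  assumes M: "M \<in> carrier_mat n n" and v: "v \<in> carrier_vec n"
    and ev: "map_mat complex_of_real M *\<^sub>v v = lam \<cdot>\<^sub>v v"
  defines "a \<equiv> vec n (\<lambda>i. Re (v $ i))" and "b \<equiv> vec n (\<lambda>i. Im (v $ i))"
  shows "M *\<^sub>v a = Re lam \<cdot>\<^sub>v a + (- Im lam) \<cdot>\<^sub>v b" and "M *\<^sub>v b = Im lam \<cdot>\<^sub>v a + Re lam \<cdot>\<^sub>v b"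
proof -
  have evi: "(\<Sum>j<n. complex_of_real (M $$ (i,j)) * v $ j) = lam * v $ i" if i: "i < n" for i
  proof -
    have "(map_mat complex_of_real M *\<^sub>v v) $ i = (lam \<cdot>\<^sub>v v) $ i" using ev by simp
    then show ?thesis using i M v by (simp add: scalar_prod_def lessThan_atLeast0)
  qed
  show "M *\<^sub>v a = Re lam \<cdot>\<^sub>v a + (- Im lam) \<cdot>\<^sub>v b"
  proof (rule eq_vecI)
    fix i assume "i < dim_vec (Re lam \<cdot>\<^sub>v a + (- Im lam) \<cdot>\<^sub>v b)"
    hence i: "i < n" unfolding a_def b_def by simp
    have "Re (\<Sum>j<n. complex_of_real (M $$ (i,j)) * v $ j) = Re (lam * v $ i)" using evi[OF i] by simp
    then show "(M *\<^sub>v a) $ i = (Re lam \<cdot>\<^sub>v a + (- Im lam) \<cdot>\<^sub>v b) $ i"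
      using i M unfolding a_def b_def by (simp add: scalar_prod_def lessThan_atLeast0 Re_sum)
  qed (use M in \<open>simp add: a_def b_def\<close>)
  show "M *\<^sub>v b = Im lam \<cdot>\<^sub>v a + Re lam \<cdot>\<^sub>v b"
  proof (rule eq_vecI)
    fix i assume "i < dim_vec (Im lam \<cdot>\<^sub>v a + Re lam \<cdot>\<^sub>v b)"
    hence i: "i < n" unfolding a_def b_def by simp
    have "Im (\<Sum>j<n. complex_of_real (M $$ (i,j)) * v $ j) = Im (lam * v $ i)" using evi[OF i] by simp
    then show "(M *\<^sub>v b) $ i = (Im lam \<cdot>\<^sub>v a + Re lam \<cdot>\<^sub>v b) $ i"
      using i M unfolding a_def b_def by (simp add: scalar_prod_def lessThan_atLeast0 Im_sum algebra_simps)
  qed (use M in \<open>simp add: a_def b_def\<close>)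
qed

lemma rho_eq_left_eigenvalue:
  fixes M :: "real mat"
  assumes n: "0 < n" and M: "M \<in> carrier_mat n n"
  obtains lam v where "rho M = cmod lam" and "v \<in> carrier_vec n" and "v \<noteq> 0\<^sub>v n"
    and "map_mat complex_of_real (transpose_mat M) *\<^sub>v v = lam \<cdot>\<^sub>v v"
proof -
  define C where "C = map_mat complex_of_real M"
  have C: "C \<in> carrier_mat n n" using M unfolding C_def by simp
  obtain lam where lam: "lam \<in> spectrum C" and rl: "rho M = cmod lam"
    using spectral_radius_mem_max(1)[OF C n] unfolding rho_def C_def[symmetric] by auto
  have "poly (char_poly C) lam = 0"
    using lam eigenvalue_root_char_poly[OF C] unfolding spectrum_def by simp
  hence "eigenvalue (transpose_mat C) lam"
    using char_poly_transpose_mat[OF C] eigenvalue_root_char_poly[of "transpose_mat C" n] C by simp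
  then show ?thesis
    using that rl unfolding eigenvalue_def eigenvector_def C_def using C M by (auto simp: map_mat_transpose)
qed

lemma Re_Im_scalar_prod_pos:
  fixes v :: "complex vec"
  assumes v: "v \<in> carrier_vec n" and v0: "v \<noteq> 0\<^sub>v n"
  shows "0 < vec n (\<lambda>i. Re (v $ i)) \<bullet> vec n (\<lambda>i. Re (v $ i)) + vec n (\<lambda>i. Im (v $ i)) \<bullet> vec n (\<lambda>i. Im (v $ i))"
    (is "0 < ?a \<bullet> ?a + ?b \<bullet> ?b")
proof -
  have "?a \<noteq> 0\<^sub>v n \<or> ?b \<noteq> 0\<^sub>v n"
  proof (rule ccontr)
    assume "\<not> ?thesis"
    then have "Re (v $ i) = 0 \<and> Im (v $ i) = 0" if "i < n" for i
      using that by (metis index_vec index_zero_vec(1))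
    then have "v = 0\<^sub>v n" using v by (intro eq_vecI) (auto simp: complex_eq_iff)
    with v0 show False ..
  qed
  then show ?thesis
    using scalar_prod_self_pos[of ?a n] scalar_prod_self_pos[of ?b n] scalar_prod_self_nonneg[of ?a]
      scalar_prod_self_nonneg[of ?b] by fastforce
qed

text \<open>For a left eigenvector v = a + i b of M with eigenvalue \<lambda>, adding the certificate
  inequality at a and at b gives |v|^2 \<le> (1 - |\<lambda>|^2) (a^T P a + b^T P b).\<close>
lemma lyapunov_certificate_imp_rho_less_1:
  fixes M P :: "real mat"
  assumes n: "0 < n" and M: "M \<in> carrier_mat n n" and P: "P \<in> carrier_mat n n"
    and cert: "lyapunov_certificate M P"
  shows "rho M < 1"
proof -
  note Ps = lyapunov_certificateD(1)[OF cert P]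
    and Ppsd = lyapunov_certificateD(2)[OF cert P]
    and lyap = lyapunov_certificateD(3)[OF cert P]
  obtain lam v where rl: "rho M = cmod lam" and v: "v \<in> carrier_vec n" and v0: "v \<noteq> 0\<^sub>v n"
    and ev: "map_mat complex_of_real (transpose_mat M) *\<^sub>v v = lam \<cdot>\<^sub>v v"
    using rho_eq_left_eigenvalue[OF n M] .
  define a where "a = vec n (\<lambda>i. Re (v $ i))"
  define b where "b = vec n (\<lambda>i. Im (v $ i))"
  define p where "p = Re lam"
  define q where "q = Im lam"
  have a: "a \<in> carrier_vec n" and b: "b \<in> carrier_vec n" unfolding a_def b_def by auto
  have MT: "transpose_mat M \<in> carrier_mat n n" using M by simp
  note Mab = eigenvector_Re_Im_mult_vec[OF MT v ev, folded a_def b_def p_def q_def]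
  define ga where "ga = a \<bullet> (P *\<^sub>v a)"
  define gb where "gb = b \<bullet> (P *\<^sub>v b)"
  define gab where "gab = a \<bullet> (P *\<^sub>v b)"
  have "a \<bullet> a \<le> ga - (p^2 * ga + 2 * p * (-q) * gab + q^2 * gb)"
    using lyap[OF a] Mab(1) quadratic_form_lincomb[OF P Ps a b, of p "-q"]
    unfolding ga_def gb_def gab_def by simp
  moreover have "b \<bullet> b \<le> gb - (q^2 * ga + 2 * q * p * gab + p^2 * gb)"
    using lyap[OF b] Mab(2) quadratic_form_lincomb[OF P Ps a b, of q p]
    unfolding ga_def gb_def gab_def by simp
  ultimately have "a \<bullet> a + b \<bullet> b \<le> (1 - (p^2 + q^2)) * (ga + gb)"
    by (simp add: algebra_simps)
  moreover have "0 < a \<bullet> a + b \<bullet> b" unfolding a_def b_def by (rule Re_Im_scalar_prod_pos[OF v v0])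
  moreover have "0 \<le> ga + gb" using Ppsd[OF a] Ppsd[OF b] unfolding ga_def gb_def by simp
  ultimately have "p^2 + q^2 < 1" by (smt (verit) mult_nonpos_nonneg)
  then show ?thesis using rl unfolding cmod_def p_def q_def by simp
qed

lemma lyapunov_certificate_energy_bound:
  fixes M P :: "real mat"
  assumes M: "M \<in> carrier_mat n n" and P: "P \<in> carrier_mat n n"
    and cert: "lyapunov_certificate M P" and x: "x \<in> carrier_vec n"
  shows "(\<Sum>t<N. (transpose_mat (M ^\<^sub>m t) *\<^sub>v x) \<bullet> (transpose_mat (M ^\<^sub>m t) *\<^sub>v x))
           \<le> x \<bullet> (P *\<^sub>v x)"
proof -
  define y where "y t = transpose_mat (M ^\<^sub>m t) *\<^sub>v x" for t
  have y: "y t \<in> carrier_vec n" for t using pow_carrier_mat[OF M, of t] x by (simp add: y_def)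
  have step: "y (Suc t) = transpose_mat M *\<^sub>v y t" for t
  proof -
    have Mt: "M ^\<^sub>m t \<in> carrier_mat n n" using M by simp
    have "y (Suc t) = (transpose_mat M * transpose_mat (M ^\<^sub>m t)) *\<^sub>v x"
      unfolding y_def using transpose_mult[OF Mt M] by simp
    also have "\<dots> = transpose_mat M *\<^sub>v y t"
      unfolding y_def by (rule assoc_mult_mat_vec) (use M Mt x in auto)
    finally show ?thesis .
  qed
  have "(\<Sum>t<N. y t \<bullet> y t) + y N \<bullet> (P *\<^sub>v y N) \<le> x \<bullet> (P *\<^sub>v x)"
  proof (induction N)
    case 0
    have "y 0 = x" using M x by (simp add: y_def)
    then show ?case by simp
  next
    case (Suc N)
    have "y N \<bullet> y N + y (Suc N) \<bullet> (P *\<^sub>v y (Suc N)) \<le> y N \<bullet> (P *\<^sub>v y N)"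
      using lyapunov_certificateD(3)[OF cert P y[of N]] unfolding step by linarith
    with Suc.IH show ?case by simp
  qed
  moreover have "0 \<le> y N \<bullet> (P *\<^sub>v y N)" by (rule lyapunov_certificateD(2)[OF cert P y])
  ultimately show ?thesis unfolding y_def by linarith
qed

text \<open>Entries of the truncated Gramian \<Sum>t<N. M^t (M^t)^T; the LQR cost of a stable loop
  M = A + B K is the trace of (Q + K^T R K) times its limit.\<close>
definition power_gramian :: "nat \<Rightarrow> nat \<Rightarrow> real mat \<Rightarrow> nat \<Rightarrow> nat \<Rightarrow> real" where
  "power_gramian n N M k l = (\<Sum>t<N. \<Sum>i<n. (M ^\<^sub>m t) $$ (k,i) * (M ^\<^sub>m t) $$ (l,i))"

lemma sum_swap_pairs:
  fixes F :: "nat \<Rightarrow> nat \<Rightarrow> nat \<Rightarrow> nat \<Rightarrow> real"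
  shows "(\<Sum>t\<in>A. \<Sum>i\<in>B. \<Sum>k\<in>C. \<Sum>l\<in>D. F t i k l) = (\<Sum>k\<in>C. \<Sum>l\<in>D. \<Sum>t\<in>A. \<Sum>i\<in>B. F t i k l)"
proof -
  have "(\<Sum>t\<in>A. \<Sum>i\<in>B. \<Sum>k\<in>C. \<Sum>l\<in>D. F t i k l) = (\<Sum>t\<in>A. \<Sum>k\<in>C. \<Sum>i\<in>B. \<Sum>l\<in>D. F t i k l)"
    by (rule sum.cong[OF refl], rule sum.swap)
  also have "\<dots> = (\<Sum>t\<in>A. \<Sum>k\<in>C. \<Sum>l\<in>D. \<Sum>i\<in>B. F t i k l)"
    by (rule sum.cong[OF refl], rule sum.cong[OF refl], rule sum.swap)
  also have "\<dots> = (\<Sum>k\<in>C. \<Sum>t\<in>A. \<Sum>l\<in>D. \<Sum>i\<in>B. F t i k l)" by (rule sum.swap)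
  also have "\<dots> = (\<Sum>k\<in>C. \<Sum>l\<in>D. \<Sum>t\<in>A. \<Sum>i\<in>B. F t i k l)"
    by (rule sum.cong[OF refl], rule sum.swap)
  finally show ?thesis .
qed

lemma sum_quadratic_form_pow_unit_vec:
  fixes M Qm :: "real mat"
  assumes M: "M \<in> carrier_mat n n" and Qm: "Qm \<in> carrier_mat n n"
  shows "(\<Sum>t<N. \<Sum>i<n. (M ^\<^sub>m t *\<^sub>v unit_vec n i) \<bullet> (Qm *\<^sub>v (M ^\<^sub>m t *\<^sub>v unit_vec n i)))
       = (\<Sum>k<n. \<Sum>l<n. Qm $$ (k,l) * power_gramian n N M l k)"
proof -
  have Mt: "M ^\<^sub>m t \<in> carrier_mat n n" for t using M by simp
  have "(M ^\<^sub>m t *\<^sub>v unit_vec n i) \<bullet> (Qm *\<^sub>v (M ^\<^sub>m t *\<^sub>v unit_vec n i))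
      = (\<Sum>k<n. \<Sum>l<n. (M ^\<^sub>m t) $$ (k,i) * Qm $$ (k,l) * (M ^\<^sub>m t) $$ (l,i))" if "i < n" for t i
    using quadratic_form_sum[OF Qm, of "M ^\<^sub>m t *\<^sub>v unit_vec n i" "M ^\<^sub>m t *\<^sub>v unit_vec n i"] Mt[of t] that
    by (auto simp: mult_mat_unit_vec_index[OF Mt[of t] that] intro!: sum.cong)
  then have "(\<Sum>t<N. \<Sum>i<n. (M ^\<^sub>m t *\<^sub>v unit_vec n i) \<bullet> (Qm *\<^sub>v (M ^\<^sub>m t *\<^sub>v unit_vec n i)))
      = (\<Sum>t<N. \<Sum>i<n. \<Sum>k<n. \<Sum>l<n. (M ^\<^sub>m t) $$ (k,i) * Qm $$ (k,l) * (M ^\<^sub>m t) $$ (l,i))"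
    by simp
  also have "\<dots> = (\<Sum>k<n. \<Sum>l<n. \<Sum>t<N. \<Sum>i<n. (M ^\<^sub>m t) $$ (k,i) * Qm $$ (k,l) * (M ^\<^sub>m t) $$ (l,i))"
    by (rule sum_swap_pairs)
  also have "\<dots> = (\<Sum>k<n. \<Sum>l<n. Qm $$ (k,l) * power_gramian n N M l k)"
    unfolding power_gramian_def by (simp add: sum_distrib_left mult.commute mult.left_commute)
  finally show ?thesis .
qed

lemma quad_form_power_gramian:
  fixes M :: "real mat"
  assumes M: "M \<in> carrier_mat n n"
  shows "quad_form n (power_gramian n N M) x =
    (\<Sum>t<N. (transpose_mat (M ^\<^sub>m t) *\<^sub>v vec n x) \<bullet> (transpose_mat (M ^\<^sub>m t) *\<^sub>v vec n x))"
proof -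
  have entry: "(transpose_mat (M ^\<^sub>m t) *\<^sub>v vec n x) $ i = (\<Sum>l<n. x l * (M ^\<^sub>m t) $$ (l,i))"
    if "i < n" for t i
    using M that by (simp add: scalar_prod_def lessThan_atLeast0 mult.commute)
  have "quad_form n (power_gramian n N M) x =
      (\<Sum>k<n. \<Sum>l<n. \<Sum>t<N. \<Sum>i<n. x k * (M ^\<^sub>m t) $$ (k,i) * (x l * (M ^\<^sub>m t) $$ (l,i)))"
    unfolding quad_form_def power_gramian_def
    by (simp add: sum_distrib_left sum_distrib_right mult.commute mult.left_commute)
  also have "\<dots> = (\<Sum>t<N. \<Sum>i<n. (\<Sum>k<n. x k * (M ^\<^sub>m t) $$ (k,i)) * (\<Sum>l<n. x l * (M ^\<^sub>m t) $$ (l,i)))"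
    unfolding sum_product by (rule sum_swap_pairs[symmetric])
  also have "\<dots> = (\<Sum>t<N. \<Sum>i<n. (transpose_mat (M ^\<^sub>m t) *\<^sub>v vec n x) $ i * (transpose_mat (M ^\<^sub>m t) *\<^sub>v vec n x) $ i)"
    by (auto simp: entry intro!: sum.cong)
  also have "\<dots> = (\<Sum>t<N. (transpose_mat (M ^\<^sub>m t) *\<^sub>v vec n x) \<bullet> (transpose_mat (M ^\<^sub>m t) *\<^sub>v vec n x))"
  proof -
    have "dim_vec (transpose_mat (M ^\<^sub>m t) *\<^sub>v vec n x) = n" for t
      using M by simp
    then show ?thesis by (simp add: scalar_prod_def lessThan_atLeast0 del: index_mult_mat_vec)
  qed
  finally show ?thesis .
qed

text \<open>P dominates the truncated Gramian G, so tr(Qm G) \<le> tr(Qm P) for psd Qm.\<close>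
lemma lyapunov_certificate_trace_bound:
  fixes M P Qm :: "real mat"
  assumes M: "M \<in> carrier_mat n n" and P: "P \<in> carrier_mat n n"
    and cert: "lyapunov_certificate M P"
    and Qm: "Qm \<in> carrier_mat n n" and Qm_psd: "\<And>x. x \<in> carrier_vec n \<Longrightarrow> 0 \<le> x \<bullet> (Qm *\<^sub>v x)"
  shows "(\<Sum>t<N. \<Sum>i<n. (M ^\<^sub>m t *\<^sub>v unit_vec n i) \<bullet> (Qm *\<^sub>v (M ^\<^sub>m t *\<^sub>v unit_vec n i)))
         \<le> mtrace (Qm * P)"
proof -
  define W where "W = (\<lambda>l k. P $$ (l,k) - power_gramian n N M l k)"
  have "0 \<le> (\<Sum>k<n. \<Sum>l<n. Qm $$ (k,l) * W l k)"
  proof (rule trace_psd_mult_nonneg)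
    show "0 \<le> quad_form n (\<lambda>k l. Qm $$ (k,l)) x" for x
      using Qm_psd[of "vec n x"] quad_form_mat[OF Qm] by simp
    have "P $$ (i,j) = P $$ (j,i)" if "i < n" "j < n" for i j
      using lyapunov_certificateD(1)[OF cert P] P that by (metis carrier_matD index_transpose_mat(1))
    then show "\<forall>i<n. \<forall>j<n. W i j = W j i"
      by (simp add: W_def power_gramian_def mult.commute)
    show "0 \<le> quad_form n W x" for x
    proof -
      have "quad_form n W x = quad_form n (\<lambda>l k. P $$ (l,k)) x - quad_form n (power_gramian n N M) x"
        unfolding quad_form_def W_def by (simp add: algebra_simps sum_subtractf)
      then show ?thesis
        using quad_form_mat[OF P] quad_form_power_gramian[OF M]
          lyapunov_certificate_energy_bound[OF M P cert, of "vec n x" N] by simp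
    qed
  qed
  also have "(\<Sum>k<n. \<Sum>l<n. Qm $$ (k,l) * W l k) = mtrace (Qm * P) -
      (\<Sum>t<N. \<Sum>i<n. (M ^\<^sub>m t *\<^sub>v unit_vec n i) \<bullet> (Qm *\<^sub>v (M ^\<^sub>m t *\<^sub>v unit_vec n i)))"
    unfolding sum_quadratic_form_pow_unit_vec[OF M Qm] mtrace_mult[OF Qm P] W_def
    by (simp add: algebra_simps sum_subtractf)
  finally show ?thesis by simp
qed

lemma sum_suminf_le_of_partial_sums_le:
  fixes f :: "nat \<Rightarrow> nat \<Rightarrow> real"
  assumes nonneg: "\<And>i t. 0 \<le> f i t" and partial: "\<And>N. (\<Sum>t<N. \<Sum>i<n. f i t) \<le> J"
  shows "(\<Sum>i<n. suminf (f i)) \<le> J"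
proof -
  have summable: "summable (f i)" if "i < n" for i
  proof (rule summableI_nonneg_bounded[where x = J])
    fix N
    have "(\<Sum>t<N. f i t) \<le> (\<Sum>t<N. \<Sum>j<n. f j t)"
      by (rule sum_mono, rule member_le_sum) (use that nonneg in auto)
    also have "\<dots> \<le> J" by (rule partial)
    finally show "(\<Sum>t<N. f i t) \<le> J" .
  qed (rule nonneg)
  have "(\<Sum>i<n. suminf (f i)) = (\<Sum>t. \<Sum>i<n. f i t)"
    by (rule suminf_sum[symmetric]) (use summable in auto)
  also have "\<dots> \<le> J"
    by (rule suminf_le_const) (use summable partial in \<open>auto intro: summable_sum\<close>)
  finally show ?thesis .
qed

text \<open>Since R = V V with V symmetric, transpose (V * K) * (V * K) is K^T R K.\<close>
lemma lqr_cost_le_trace: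
  fixes A B K Q R V P :: "real mat"
  assumes n: "0 < n" and A: "A \<in> carrier_mat n n" and B: "B \<in> carrier_mat n m"
    and K: "K \<in> carrier_mat m n" and Q: "Q \<in> carrier_mat n n" "psd Q"
    and V: "V \<in> carrier_mat m m" and Vs: "transpose_mat V = V" and VR: "V * V = R"
    and P: "P \<in> carrier_mat n n" and cert: "lyapunov_certificate (A + B * K) P"
  shows "lqr_cost n A B Q R K \<le> ereal (mtrace (Q * P) + mtrace (transpose_mat (V * K) * (V * K) * P))"
proof -
  define M where "M = A + B * K"
  have M: "M \<in> carrier_mat n n" unfolding M_def using A B K by simp
  define C where "C = V * K"
  have C: "C \<in> carrier_mat m n" unfolding C_def using V K by simp
  define Q2 where "Q2 = transpose_mat C * C"
  have Q2: "Q2 \<in> carrier_mat n n" unfolding Q2_def using C by simp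
  define x where "x i t = M ^\<^sub>m t *\<^sub>v unit_vec n i" for i t
  have x: "x i t \<in> carrier_vec n" for i t unfolding x_def using pow_carrier_mat[OF M, of t] by simp
  have Qpsd: "0 \<le> y \<bullet> (Q *\<^sub>v y)" if "y \<in> carrier_vec n" for y
    using Q that unfolding psd_def by auto
  have Q2psd: "0 \<le> y \<bullet> (Q2 *\<^sub>v y)" if "y \<in> carrier_vec n" for y
    unfolding Q2_def quadratic_form_gram[OF C that] by (rule scalar_prod_self_nonneg)
  have Q2x: "x i t \<bullet> (Q2 *\<^sub>v x i t) = (C *\<^sub>v x i t) \<bullet> (C *\<^sub>v x i t)" for i t
    unfolding Q2_def by (rule quadratic_form_gram[OF C x])
  have Ru: "(K *\<^sub>v x i t) \<bullet> (R *\<^sub>v (K *\<^sub>v x i t)) = x i t \<bullet> (Q2 *\<^sub>v x i t)" for i t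
  proof -
    have Kx: "K *\<^sub>v x i t \<in> carrier_vec m" using K x by simp
    have "(K *\<^sub>v x i t) \<bullet> (R *\<^sub>v (K *\<^sub>v x i t)) = (K *\<^sub>v x i t) \<bullet> ((transpose_mat V * V) *\<^sub>v (K *\<^sub>v x i t))"
      unfolding Vs VR ..
    also have "\<dots> = (C *\<^sub>v x i t) \<bullet> (C *\<^sub>v x i t)"
      unfolding quadratic_form_gram[OF V Kx] C_def using V K x by simp
    finally show ?thesis unfolding Q2x .
  qed
  define f where "f = (\<lambda>i t. x i t \<bullet> (Q *\<^sub>v x i t) + x i t \<bullet> (Q2 *\<^sub>v x i t))"
  have "(\<Sum>i<n. suminf (f i)) \<le> mtrace (Q * P) + mtrace (Q2 * P)"
  proof (rule sum_suminf_le_of_partial_sums_le)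
    show "0 \<le> f i t" for i t unfolding f_def using Qpsd[OF x] Q2psd[OF x] by simp
    show "(\<Sum>t<N. \<Sum>i<n. f i t) \<le> mtrace (Q * P) + mtrace (Q2 * P)" for N
      unfolding f_def sum.distrib x_def
      by (intro add_mono lyapunov_certificate_trace_bound[OF M P cert[folded M_def]] Q(1) Q2 Qpsd Q2psd)
  qed
  moreover have "schur_stable M"
    unfolding schur_stable_def by (rule lyapunov_certificate_imp_rho_less_1[OF n M P cert[folded M_def]])
  ultimately show ?thesis
    unfolding lqr_cost_def M_def[symmetric] C_def[symmetric] Q2_def[symmetric] using Ru
    by (simp add: f_def x_def Let_def)
qed

section \<open>The data-driven matrix inequalities\<close>

lemma data_mat_carrier:
  fixes A B X U :: "real mat"
  assumes "A \<in> carrier_mat n n" "B \<in> carrier_mat n m" "X \<in> carrier_mat n T" "U \<in> carrier_mat m T"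
  shows "vcat (A * X + B * U) (vcat X U) \<in> carrier_mat (2*n+m) T"
  using assms by (metis add.assoc mult_2 vcat_carrier add_carrier_mat mult_carrier_mat)

lemma data_blocks_carrier:
  assumes "DD \<in> carrier_mat (2*n+m) T"
  shows "Zd n m DD \<in> carrier_mat n T" "Xd n m DD \<in> carrier_mat n T" "Ud n m DD \<in> carrier_mat m T"
  using assms by (auto simp: Zd_def Xd_def Ud_def row_block_def)

lemma vcat_row_blocks:
  assumes "DD \<in> carrier_mat (2*n+m) T"
  shows "vcat (Zd n m DD) (vcat (Xd n m DD) (Ud n m DD)) = DD"
  by (rule eq_matI) (use assms in \<open>auto simp: vcat_def Zd_def Xd_def Ud_def row_block_def\<close>)

lemma Dbar_lower_mult_vec:
  fixes DD :: "real mat"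
  assumes DD: "DD \<in> carrier_mat (2*n+m) T"
    and x: "x \<in> carrier_vec n" and a: "a \<in> carrier_vec n" and b: "b \<in> carrier_vec m"
  shows "hcat (transpose_mat (Zd n m DD)) (hcat (- transpose_mat (Xd n m DD)) (- transpose_mat (Ud n m DD)))
           *\<^sub>v (x @\<^sub>v (a @\<^sub>v b))
         = transpose_mat DD *\<^sub>v (x @\<^sub>v ((- a) @\<^sub>v (- b)))"
proof -
  have Z: "transpose_mat (Zd n m DD) \<in> carrier_mat T n" and X: "transpose_mat (Xd n m DD) \<in> carrier_mat T n"
    and U: "transpose_mat (Ud n m DD) \<in> carrier_mat T m"
    using data_blocks_carrier[OF DD] by auto
  let ?Z = "Zd n m DD" and ?X = "Xd n m DD" and ?U = "Ud n m DD"
  have "transpose_mat DD = transpose_mat (vcat ?Z (vcat ?X ?U))" using vcat_row_blocks[OF DD] by simp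
  also have "\<dots> = hcat (transpose_mat ?Z) (hcat (transpose_mat ?X) (transpose_mat ?U))"
  proof -
    have "dim_col ?Z = dim_col (vcat ?X ?U)" "dim_col ?X = dim_col ?U"
      using data_blocks_carrier[OF DD] by (auto simp: vcat_def)
    then show ?thesis by (simp add: transpose_vcat)
  qed
  finally have DDT: "transpose_mat DD = hcat (transpose_mat ?Z) (hcat (transpose_mat ?X) (transpose_mat ?U))" .
  have "hcat (transpose_mat ?Z) (hcat (- transpose_mat ?X) (- transpose_mat ?U)) *\<^sub>v (x @\<^sub>v (a @\<^sub>v b))
      = transpose_mat ?Z *\<^sub>v x + (- transpose_mat ?X *\<^sub>v a + - transpose_mat ?U *\<^sub>v b)"
    using Z X U x a b by (simp add: hcat_mult_append_vec[of _ T n _ "n+m"] hcat_mult_append_vec[of _ T n _ m])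
  also have "\<dots> = transpose_mat ?Z *\<^sub>v x + (transpose_mat ?X *\<^sub>v (- a) + transpose_mat ?U *\<^sub>v (- b))"
    using X U a b by (simp add: mult_mat_vec_uminus[of _ T n] mult_mat_vec_uminus[of _ T m])
  also have "\<dots> = transpose_mat DD *\<^sub>v (x @\<^sub>v ((- a) @\<^sub>v (- b)))"
    unfolding DDT using Z X U x a b
    by (simp add: hcat_mult_append_vec[of _ T n _ "n+m"] hcat_mult_append_vec[of _ T n _ m])
  finally show ?thesis .
qed

lemma N_mat_carrier:
  assumes DD: "DD \<in> carrier_mat (2*n+m) T"
  shows "N_mat n m T eps DD \<in> carrier_mat (2*n+m+n) (2*n+m+n)"
proof -
  have "2*n+m = n+(n+m)" by simp
  then have "hcat (transpose_mat (Zd n m DD)) (hcat (- transpose_mat (Xd n m DD)) (- transpose_mat (Ud n m DD)))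
      \<in> carrier_mat T (2*n+m)"
    using data_blocks_carrier[OF DD] by (metis hcat_carrier transpose_carrier_mat uminus_carrier_iff_mat)
  then have "Dbar n m DD \<in> carrier_mat (2*n+m+T) (2*n+m)"
    unfolding Dbar_def Let_def by (rule vcat_carrier[OF one_carrier_mat])
  moreover have "bdiag ((eps^2 * real ((2*n+m) * T)) \<cdot>\<^sub>m 1\<^sub>m (2*n+m)) (- 1\<^sub>m T)
      \<in> carrier_mat (2*n+m+T) (2*n+m+T)"
    unfolding bdiag_def by (rule four_block_carrier_mat) auto
  ultimately have "transpose_mat (Dbar n m DD) * bdiag ((eps^2 * real ((2*n+m) * T)) \<cdot>\<^sub>m 1\<^sub>m (2*n+m)) (- 1\<^sub>m T)
      * Dbar n m DD \<in> carrier_mat (2*n+m) (2*n+m)"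
    by (meson mult_carrier_mat transpose_carrier_mat)
  then show ?thesis unfolding N_mat_def bdiag_def by (rule four_block_carrier_mat) simp
qed

lemma N_mat_quadratic_form:
  fixes DD :: "real mat"
  assumes DD: "DD \<in> carrier_mat (2*n+m) T"
    and x: "x \<in> carrier_vec n" and a: "a \<in> carrier_vec n" and b: "b \<in> carrier_vec m"
    and y: "y \<in> carrier_vec n"
  defines "r \<equiv> transpose_mat DD *\<^sub>v (x @\<^sub>v ((- a) @\<^sub>v (- b)))"
  shows "(((x @\<^sub>v a) @\<^sub>v b) @\<^sub>v y) \<bullet> (N_mat n m T eps DD *\<^sub>v (((x @\<^sub>v a) @\<^sub>v b) @\<^sub>v y))
     = eps^2 * real ((2*n+m) * T) * (x \<bullet> x + a \<bullet> a + b \<bullet> b) - r \<bullet> r"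
proof -
  define Hc where "Hc = hcat (transpose_mat (Zd n m DD)) (hcat (- transpose_mat (Xd n m DD)) (- transpose_mat (Ud n m DD)))"
  have Hc: "Hc \<in> carrier_mat T (2*n+m)"
    using data_blocks_carrier[OF DD] unfolding Hc_def by (metis add.assoc hcat_carrier mult_2
        transpose_carrier_mat uminus_carrier_iff_mat)
  define c where "c = eps^2 * real ((2*n+m) * T)"
  define Db where "Db = Dbar n m DD"
  have Db_eq: "Db = vcat (1\<^sub>m (2*n+m)) Hc" unfolding Db_def Dbar_def Hc_def by simp
  have Db: "Db \<in> carrier_mat (2*n+m+T) (2*n+m)" unfolding Db_eq using Hc by simp
  define H where "H = bdiag (c \<cdot>\<^sub>m 1\<^sub>m (2*n+m)) (- 1\<^sub>m T)"
  have H: "H \<in> carrier_mat (2*n+m+T) (2*n+m+T)" unfolding H_def bdiag_def by auto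
  define G where "G = transpose_mat Db * H * Db"
  have G: "G \<in> carrier_mat (2*n+m) (2*n+m)" unfolding G_def using Db H by auto
  have "N_mat n m T eps DD = four_block_mat G (0\<^sub>m (2*n+m) n) (0\<^sub>m n (2*n+m)) (0\<^sub>m n n)"
    using Db unfolding N_mat_def G_def H_def Db_def c_def by (simp add: bdiag_def)
  moreover define w where "w = (x @\<^sub>v a) @\<^sub>v b"
  moreover have w: "w \<in> carrier_vec (2*n+m)" unfolding w_def using x a b by (simp add: mult_2)
  ultimately have "(w @\<^sub>v y) \<bullet> (N_mat n m T eps DD *\<^sub>v (w @\<^sub>v y)) = w \<bullet> (G *\<^sub>v w)"
    using scalar_prod_four_block_mat_mult_vec[OF G _ _ _ w y w y] y G by simp
  also have "\<dots> = (Db *\<^sub>v w) \<bullet> (H *\<^sub>v (Db *\<^sub>v w))"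
  proof -
    have z: "H *\<^sub>v (Db *\<^sub>v w) \<in> carrier_vec (2*n+m+T)" using H Db w by simp
    have "G *\<^sub>v w = transpose_mat Db *\<^sub>v (H *\<^sub>v (Db *\<^sub>v w))"
      unfolding G_def using Db H w by (simp add: assoc_mult_mat_vec[of _ "2*n+m" "2*n+m+T" _ "2*n+m"]
          assoc_mult_mat_vec[of _ "2*n+m+T" "2*n+m+T" _ "2*n+m"])
    then show ?thesis
      using transpose_vec_mult_scalar[OF Db w z] comm_scalar_prod[of w "2*n+m"]
        comm_scalar_prod[of "Db *\<^sub>v w" "2*n+m+T"] Db w z
      by (metis mult_mat_vec_carrier transpose_carrier_mat)
  qed
  also have "Db *\<^sub>v w = w @\<^sub>v (Hc *\<^sub>v w)"
    unfolding Db_eq using vcat_mult_vec[OF one_carrier_mat Hc w] w by simp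
  also have "(w @\<^sub>v (Hc *\<^sub>v w)) \<bullet> (H *\<^sub>v (w @\<^sub>v (Hc *\<^sub>v w))) = c * (w \<bullet> w) - (Hc *\<^sub>v w) \<bullet> (Hc *\<^sub>v w)"
  proof -
    have r: "Hc *\<^sub>v w \<in> carrier_vec T" using Hc w by simp
    have "(- 1\<^sub>m T) *\<^sub>v (Hc *\<^sub>v w) = - (Hc *\<^sub>v w)" using Hc w by (subst uminus_mult_mat_vec) auto
    then show ?thesis unfolding H_def bdiag_def
      using scalar_prod_four_block_mat_mult_vec[of "c \<cdot>\<^sub>m 1\<^sub>m (2*n+m)" "2*n+m" "2*n+m"
          "0\<^sub>m (2*n+m) T" T "0\<^sub>m T (2*n+m)" T "- 1\<^sub>m T" w "Hc *\<^sub>v w" w "Hc *\<^sub>v w"] r w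
      by (simp add: smult_mat_mult_vec[of _ "2*n+m" "2*n+m"])
  qed
  also have "w \<bullet> w = x \<bullet> x + a \<bullet> a + b \<bullet> b" unfolding w_def using x a b
    by (simp add: scalar_prod_append[of _ "n+n" _ m] scalar_prod_append[of _ n _ n])
  also have "Hc *\<^sub>v w = r"
    unfolding r_def Hc_def w_def append_vec_assoc by (rule Dbar_lower_mult_vec[OF DD x a b])
  finally show ?thesis unfolding c_def w_def .
qed

lemma noise_free_data_residual:
  fixes A B X U :: "real mat"
  assumes A: "A \<in> carrier_mat n n" and B: "B \<in> carrier_mat n m"
    and X: "X \<in> carrier_mat n T" and U: "U \<in> carrier_mat m T" and x: "x \<in> carrier_vec n"
  shows "transpose_mat (vcat (A * X + B * U) (vcat X U))
           *\<^sub>v (x @\<^sub>v ((- (transpose_mat A *\<^sub>v x)) @\<^sub>v (- (transpose_mat B *\<^sub>v x)))) = 0\<^sub>v T"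
proof -
  define a where "a = transpose_mat A *\<^sub>v x"
  define b where "b = transpose_mat B *\<^sub>v x"
  have a: "a \<in> carrier_vec n" and b: "b \<in> carrier_vec m" unfolding a_def b_def using A B x by auto
  have Z: "A * X + B * U \<in> carrier_mat n T" using A B X U by simp
  have "transpose_mat (A * X + B * U) = transpose_mat X * transpose_mat A + transpose_mat U * transpose_mat B"
    using A B X U by (simp add: transpose_add[of _ n T] transpose_mult)
  then have Zx: "transpose_mat (A * X + B * U) *\<^sub>v x = transpose_mat X *\<^sub>v a + transpose_mat U *\<^sub>v b"
    unfolding a_def b_def using A B X U x
    by (simp add: add_mult_distrib_mat_vec[of _ T n] assoc_mult_mat_vec[of _ T n _ n]
        assoc_mult_mat_vec[of _ T m _ n])
  have "dim_col (A * X + B * U) = dim_col (vcat X U)" "dim_col X = dim_col U"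
    using Z X U by (auto simp: vcat_def)
  then have "transpose_mat (vcat (A * X + B * U) (vcat X U)) *\<^sub>v (x @\<^sub>v ((- a) @\<^sub>v (- b)))
      = transpose_mat (A * X + B * U) *\<^sub>v x + (transpose_mat X *\<^sub>v (- a) + transpose_mat U *\<^sub>v (- b))"
    using Z X U x a b
    by (simp add: transpose_vcat hcat_mult_append_vec[of _ T n _ "n+m"] hcat_mult_append_vec[of _ T n _ m])
  also have "\<dots> = 0\<^sub>v T"
    unfolding Zx using X U a b by (intro eq_vecI) (auto simp: mult_mat_vec_uminus[of _ T n]
        mult_mat_vec_uminus[of _ T m])
  finally show ?thesis unfolding a_def b_def .
qed

text \<open>The noise-free part of the residual cancels, leaving Delta^T (x, -A^T x, -B^T x), which the
  entrywise bound on Delta controls.\<close>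
lemma N_mat_quadratic_form_nonneg:
  fixes A B X U Z \<Delta> DD :: "real mat"
  assumes A: "A \<in> carrier_mat n n" and B: "B \<in> carrier_mat n m"
    and X: "X \<in> carrier_mat n T" and U: "U \<in> carrier_mat m T" and Z: "Z = A * X + B * U"
    and Delta: "\<Delta> \<in> carrier_mat (2*n+m) T"
    and entries: "\<And>i j. i < 2*n+m \<Longrightarrow> j < T \<Longrightarrow> \<bar>\<Delta> $$ (i,j)\<bar> \<le> eps"
    and DD: "DD = vcat Z (vcat X U) + \<Delta>"
    and x: "x \<in> carrier_vec n" and y: "y \<in> carrier_vec n"
  shows "0 \<le> (((x @\<^sub>v transpose_mat A *\<^sub>v x) @\<^sub>v transpose_mat B *\<^sub>v x) @\<^sub>v y) \<bullet>
              (N_mat n m T eps DD *\<^sub>v (((x @\<^sub>v transpose_mat A *\<^sub>v x) @\<^sub>v transpose_mat B *\<^sub>v x) @\<^sub>v y))"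
proof -
  define a where "a = transpose_mat A *\<^sub>v x"
  define b where "b = transpose_mat B *\<^sub>v x"
  have a: "a \<in> carrier_vec n" and b: "b \<in> carrier_vec m" unfolding a_def b_def using A B x by auto
  define v where "v = x @\<^sub>v ((- a) @\<^sub>v (- b))"
  have v: "v \<in> carrier_vec (2*n+m)" unfolding v_def using x a b by (simp add: mult_2 add.assoc)
  have D0: "vcat Z (vcat X U) \<in> carrier_mat (2*n+m) T" unfolding Z by (rule data_mat_carrier[OF A B X U])
  have DDc: "DD \<in> carrier_mat (2*n+m) T" unfolding DD using D0 Delta by simp
  have "transpose_mat DD *\<^sub>v v = transpose_mat (vcat Z (vcat X U)) *\<^sub>v v + transpose_mat \<Delta> *\<^sub>v v"
    unfolding DD using D0 Delta v
    by (simp add: transpose_add[of _ "2*n+m" T] add_mult_distrib_mat_vec[of _ T "2*n+m"])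
  also have "transpose_mat (vcat Z (vcat X U)) *\<^sub>v v = 0\<^sub>v T"
    unfolding Z v_def a_def b_def by (rule noise_free_data_residual[OF A B X U x])
  finally have res: "transpose_mat DD *\<^sub>v v = transpose_mat \<Delta> *\<^sub>v v" using Delta v by simp
  have "(transpose_mat \<Delta> *\<^sub>v v) \<bullet> (transpose_mat \<Delta> *\<^sub>v v) \<le> eps^2 * real (T * (2*n+m)) * (v \<bullet> v)"
    by (rule mult_mat_vec_square_le_max_entry) (use Delta entries v in auto)
  moreover have "v \<bullet> v = x \<bullet> x + a \<bullet> a + b \<bullet> b"
    unfolding v_def using x a b by (simp add: scalar_prod_append[of _ n _ "n+m"] scalar_prod_append[of _ n _ m])
  ultimately show ?thesis
    unfolding N_mat_quadratic_form[OF DDc x a b y] a_def[symmetric] b_def[symmetric] v_def[symmetric] res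
    by (simp add: mult.commute)
qed

lemma robust_mat_carrier:
  assumes DD: "DD \<in> carrier_mat (2*n+m) T" and L: "L \<in> carrier_mat T n"
  shows "robust_mat n m L \<beta> DD \<in> carrier_mat (n+n+(m+n)) (n+n+(m+n))"
proof -
  have "Xd n m DD * L \<in> carrier_mat n n" "Ud n m DD * L \<in> carrier_mat m n"
    using data_blocks_carrier[OF DD] L by auto
  then show ?thesis unfolding robust_mat_def Let_def block4_def
    by (intro four_block_carrier_mat) auto
qed

text \<open>For a = A^T x and b = B^T x one has a + k = (A + B K)^T x, so the right-hand side is
  the Lyapunov expression of the closed loop.\<close>
lemma robust_mat_quadratic_form:
  fixes DD L K P :: "real mat"
  assumes DD: "DD \<in> carrier_mat (2*n+m) T" and L: "L \<in> carrier_mat T n" and K: "K \<in> carrier_mat m n"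
    and P_def: "P = Xd n m DD * L" and Ps: "transpose_mat P = P" and KP: "K * P = Ud n m DD * L"
    and x: "x \<in> carrier_vec n" and a: "a \<in> carrier_vec n" and b: "b \<in> carrier_vec m"
  defines "k \<equiv> transpose_mat K *\<^sub>v b"
  shows "((x @\<^sub>v a) @\<^sub>v (b @\<^sub>v (-1) \<cdot>\<^sub>v k)) \<bullet> (robust_mat n m L \<beta> DD *\<^sub>v ((x @\<^sub>v a) @\<^sub>v (b @\<^sub>v (-1) \<cdot>\<^sub>v k)))
       = x \<bullet> (P *\<^sub>v x) - \<beta> * (x \<bullet> x) - (a + k) \<bullet> (P *\<^sub>v (a + k))"
proof -
  define G where "G = Ud n m DD * L"
  define y where "y = (-1) \<cdot>\<^sub>v k"
  have P: "P \<in> carrier_mat n n" and G: "G \<in> carrier_mat m n"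
    unfolding P_def G_def using data_blocks_carrier[OF DD] L by auto
  have k: "k \<in> carrier_vec n" and y: "y \<in> carrier_vec n" unfolding k_def y_def using K b by auto
  have GT: "transpose_mat G = P * transpose_mat K"
    using transpose_mult[OF K P] Ps KP unfolding G_def by simp
  have Req: "robust_mat n m L \<beta> DD = block4 (P - \<beta> \<cdot>\<^sub>m 1\<^sub>m n) (0\<^sub>m n n) (0\<^sub>m n m) (0\<^sub>m n n)
             (0\<^sub>m n n) (- P) (- transpose_mat G) (0\<^sub>m n n)
             (0\<^sub>m m n) (- G) (0\<^sub>m m m) G
             (0\<^sub>m n n) (0\<^sub>m n n) (transpose_mat G) P"
    unfolding robust_mat_def Let_def P_def G_def
    using transpose_mult[OF _ L, of "Ud n m DD" m] data_blocks_carrier[OF DD] by simp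
  have "((x @\<^sub>v a) @\<^sub>v (b @\<^sub>v y)) \<bullet> (robust_mat n m L \<beta> DD *\<^sub>v ((x @\<^sub>v a) @\<^sub>v (b @\<^sub>v y)))
      = x \<bullet> ((P - \<beta> \<cdot>\<^sub>m 1\<^sub>m n) *\<^sub>v x) + a \<bullet> ((- P) *\<^sub>v a) + a \<bullet> ((- transpose_mat G) *\<^sub>v b)
        + b \<bullet> ((- G) *\<^sub>v a) + b \<bullet> (G *\<^sub>v y) + y \<bullet> (transpose_mat G *\<^sub>v b) + y \<bullet> (P *\<^sub>v y)"
  proof -
    have "P - \<beta> \<cdot>\<^sub>m 1\<^sub>m n \<in> carrier_mat n n" "- P \<in> carrier_mat n n" "- transpose_mat G \<in> carrier_mat n m"
      "- G \<in> carrier_mat m n" "transpose_mat G \<in> carrier_mat n m" using P G by auto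
    from scalar_prod_block4_mult_vec[OF this(1) zero_carrier_mat zero_carrier_mat zero_carrier_mat
        zero_carrier_mat this(2,3) zero_carrier_mat zero_carrier_mat this(4) zero_carrier_mat G
        zero_carrier_mat zero_carrier_mat this(5) P x a b y]
    show ?thesis unfolding Req using x a b y by simp
  qed
  also have "\<dots> = x \<bullet> (P *\<^sub>v x) - \<beta> * (x \<bullet> x) - a \<bullet> (P *\<^sub>v a) - 2 * (a \<bullet> (P *\<^sub>v k)) - k \<bullet> (P *\<^sub>v k)"
  proof -
    have Gv: "b \<bullet> (G *\<^sub>v v) = k \<bullet> (P *\<^sub>v v)" if v: "v \<in> carrier_vec n" for v
    proof -
      have "G *\<^sub>v v = K *\<^sub>v (P *\<^sub>v v)" unfolding KP[folded G_def, symmetric] using K P v by simp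
      then show ?thesis unfolding k_def using transpose_vec_mult_scalar[OF K _ b, of "P *\<^sub>v v"] P v by simp
    qed
    have "y \<bullet> (transpose_mat G *\<^sub>v b) = - (k \<bullet> (P *\<^sub>v k))" and "a \<bullet> (transpose_mat G *\<^sub>v b) = a \<bullet> (P *\<^sub>v k)"
      unfolding GT y_def k_def using P K b a k by (auto simp: assoc_mult_mat_vec[of _ n n _ m] k_def)
    moreover have "b \<bullet> (G *\<^sub>v a) = a \<bullet> (P *\<^sub>v k)"
      using Gv[OF a] scalar_prod_mult_vec_sym[OF P Ps a k] by simp
    moreover have "b \<bullet> (G *\<^sub>v y) = - (k \<bullet> (P *\<^sub>v k))" and "y \<bullet> (P *\<^sub>v y) = k \<bullet> (P *\<^sub>v k)"
      using Gv[OF y] P k unfolding y_def by (simp_all add: mult_mat_vec[of _ n n])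
    ultimately show ?thesis
      using P G x a b y
      by (simp add: minus_mult_distrib_mat_vec[of _ n n] smult_mat_mult_vec[of _ n n]
          scalar_prod_minus_distrib[of _ n])
  qed
  also have "\<dots> = x \<bullet> (P *\<^sub>v x) - \<beta> * (x \<bullet> x) - (a + k) \<bullet> (P *\<^sub>v (a + k))"
    using quadratic_form_lincomb[OF P Ps a k, of 1 1] a k by simp
  finally show ?thesis unfolding y_def .
qed

lemma psd_minus_smult_quadratic_form_nonneg:
  fixes R N :: "real mat"
  assumes psd: "psd (R - \<alpha> \<cdot>\<^sub>m N)" and R: "R \<in> carrier_mat d d" and N: "N \<in> carrier_mat d d"
    and \<alpha>: "0 \<le> \<alpha>" and w: "w \<in> carrier_vec d" and Nw: "0 \<le> w \<bullet> (N *\<^sub>v w)"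
  shows "0 \<le> w \<bullet> (R *\<^sub>v w)"
proof -
  have "0 \<le> w \<bullet> ((R - \<alpha> \<cdot>\<^sub>m N) *\<^sub>v w)" using psd R N w unfolding psd_def by auto
  also have "\<dots> = w \<bullet> (R *\<^sub>v w) - \<alpha> * (w \<bullet> (N *\<^sub>v w))"
    using R N w by (simp add: minus_mult_distrib_mat_vec[of _ d d] smult_mat_mult_vec[of _ d d]
        scalar_prod_minus_distrib[of _ d])
  finally show ?thesis using mult_nonneg_nonneg[OF \<alpha> Nw] by linarith
qed

lemma transpose_closed_loop_mult_vec:
  fixes A B K :: "real mat"
  assumes A: "A \<in> carrier_mat n n" and B: "B \<in> carrier_mat n m" and K: "K \<in> carrier_mat m n"
    and x: "x \<in> carrier_vec n"
  shows "transpose_mat (A + B * K) *\<^sub>v x = transpose_mat A *\<^sub>v x + transpose_mat K *\<^sub>v (transpose_mat B *\<^sub>v x)"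
  using A B K x
  by (simp add: transpose_add[of _ n n] transpose_mult add_mult_distrib_mat_vec[of _ n n]
      assoc_mult_mat_vec[of _ n m _ n])

lemma robust_lmi_imp_lyapunov_certificate:
  fixes A B X U Z \<Delta> DD L K :: "real mat"
  assumes A: "A \<in> carrier_mat n n" and B: "B \<in> carrier_mat n m"
    and X: "X \<in> carrier_mat n T" and U: "U \<in> carrier_mat m T" and Z: "Z = A * X + B * U"
    and Delta: "\<Delta> \<in> carrier_mat (2*n+m) T"
    and entries: "\<And>i j. i < 2*n+m \<Longrightarrow> j < T \<Longrightarrow> \<bar>\<Delta> $$ (i,j)\<bar> \<le> eps"
    and DD: "DD = vcat Z (vcat X U) + \<Delta>"
    and L: "L \<in> carrier_mat T n" and K: "K \<in> carrier_mat m n"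
    and rob: "psd (robust_mat n m L \<beta> DD - \<alpha> \<cdot>\<^sub>m N_mat n m T eps DD)" and \<alpha>: "0 \<le> \<alpha>" and \<beta>: "1 \<le> \<beta>"
    and P_psd: "psd (Xd n m DD * L)" and KP: "K * (Xd n m DD * L) = Ud n m DD * L"
  shows "lyapunov_certificate (A + B * K) (Xd n m DD * L)"
proof -
  define P where "P = Xd n m DD * L"
  have DDc: "DD \<in> carrier_mat (2*n+m) T"
    unfolding DD Z using data_mat_carrier[OF A B X U] Delta by simp
  have P: "P \<in> carrier_mat n n" unfolding P_def using data_blocks_carrier[OF DDc] L by simp
  have Ps: "transpose_mat P = P" using P_psd unfolding P_def psd_def by simp
  define R where "R = robust_mat n m L \<beta> DD"
  define N where "N = N_mat n m T eps DD"
  have R: "R \<in> carrier_mat (2*n+m+n) (2*n+m+n)"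
    using robust_mat_carrier[OF DDc L] unfolding R_def by (simp add: mult_2 add.assoc)
  have N: "N \<in> carrier_mat (2*n+m+n) (2*n+m+n)" unfolding N_def by (rule N_mat_carrier[OF DDc])
  show ?thesis unfolding lyapunov_certificate_def P_def[symmetric]
  proof (intro conjI ballI)
    fix x :: "real vec" assume "x \<in> carrier_vec (dim_row P)"
    then have x: "x \<in> carrier_vec n" using P by simp
    define a where "a = transpose_mat A *\<^sub>v x"
    define b where "b = transpose_mat B *\<^sub>v x"
    define k where "k = transpose_mat K *\<^sub>v b"
    have a: "a \<in> carrier_vec n" and b: "b \<in> carrier_vec m" and k: "k \<in> carrier_vec n"
      unfolding a_def b_def k_def using A B K x by auto
    have y: "(-1) \<cdot>\<^sub>v k \<in> carrier_vec n" using k by simp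
    define w where "w = ((x @\<^sub>v a) @\<^sub>v b) @\<^sub>v (-1) \<cdot>\<^sub>v k"
    have w: "w \<in> carrier_vec (2*n+m+n)" unfolding w_def using x a b k by (simp add: mult_2)
    have "0 \<le> w \<bullet> (R *\<^sub>v w)"
    proof (rule psd_minus_smult_quadratic_form_nonneg[OF rob[folded R_def N_def] R N \<alpha> w])
      show "0 \<le> w \<bullet> (N *\<^sub>v w)"
        unfolding N_def w_def a_def b_def
        by (rule N_mat_quadratic_form_nonneg[OF A B X U Z Delta entries DD x y])
    qed
    also have "w \<bullet> (R *\<^sub>v w) = x \<bullet> (P *\<^sub>v x) - \<beta> * (x \<bullet> x) - (a + k) \<bullet> (P *\<^sub>v (a + k))"
      unfolding R_def w_def append_vec_assoc[of "x @\<^sub>v a" b] k_def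
      by (rule robust_mat_quadratic_form[OF DDc L K P_def Ps KP[folded P_def] x a b])
    finally have "(a + k) \<bullet> (P *\<^sub>v (a + k)) \<le> x \<bullet> (P *\<^sub>v x) - \<beta> * (x \<bullet> x)" by simp
    moreover have "x \<bullet> x \<le> \<beta> * (x \<bullet> x)"
      using \<beta> scalar_prod_self_nonneg[of x] by (simp add: mult_le_cancel_right1)
    ultimately show "x \<bullet> x \<le> x \<bullet> (P *\<^sub>v x)
        - (transpose_mat (A + B * K) *\<^sub>v x) \<bullet> (P *\<^sub>v (transpose_mat (A + B * K) *\<^sub>v x))"
      unfolding transpose_closed_loop_mult_vec[OF A B K x] a_def b_def k_def by simp
  qed (use P_psd P_def in simp)
qed

lemma F_mat_psd_blocks:
  assumes DD: "DD \<in> carrier_mat (2*n+m) T" and L: "L \<in> carrier_mat T n"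
    and S: "S \<in> carrier_mat m m" and V: "V \<in> carrier_mat m m"
    and F: "psd (F_mat n m V L S DD)"
  shows "psd (four_block_mat S (V * Ud n m DD * L) (transpose_mat (V * Ud n m DD * L)) (Xd n m DD * L))"
    and "psd (Xd n m DD * L - 1\<^sub>m n)"
proof -
  note blocks = data_blocks_carrier[OF DD]
  define P where "P = Xd n m DD * L"
  define G where "G = V * Ud n m DD * L"
  have P: "P \<in> carrier_mat n n" and G: "G \<in> carrier_mat m n" and ZL: "Zd n m DD * L \<in> carrier_mat n n"
    unfolding P_def G_def using blocks L V by auto
  define M1 where "M1 = four_block_mat S G (transpose_mat G) P"
  define M2 where "M2 = four_block_mat (P - 1\<^sub>m n) (Zd n m DD * L) (transpose_mat (Zd n m DD * L)) P"
  have M1: "M1 \<in> carrier_mat (m+n) (m+n)" and M2: "M2 \<in> carrier_mat (n+n) (n+n)"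
    unfolding M1_def M2_def using S G P ZL by auto
  have "F_mat n m V L S DD = four_block_mat M1 (0\<^sub>m (m+n) (n+n)) (0\<^sub>m (n+n) (m+n)) M2"
    unfolding F_mat_def Let_def bdiag_def P_def[symmetric] G_def[symmetric] M1_def[symmetric]
      M2_def[symmetric] using M1 M2 by simp
  with F have "psd (four_block_mat M1 (0\<^sub>m (m+n) (n+n)) (0\<^sub>m (n+n) (m+n)) M2)" by simp
  note psd_M = psd_four_block_mat(1,2)[OF this M1 zero_carrier_mat zero_carrier_mat M2]
  show "psd (four_block_mat S G (transpose_mat G) P)" using psd_M(1) unfolding M1_def .
  have "P - 1\<^sub>m n \<in> carrier_mat n n" "transpose_mat (Zd n m DD * L) \<in> carrier_mat n n" using P ZL by auto
  from psd_four_block_mat(1)[OF psd_M(2)[unfolded M2_def] this(1) ZL this(2) P]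
  show "psd (P - 1\<^sub>m n)" .
qed

lemma F_K_mult:
  assumes DD: "DD \<in> carrier_mat (2*n+m) T" and L: "L \<in> carrier_mat T n"
    and det: "det (Xd n m DD * L) \<noteq> 0"
  shows "F_K n m L DD \<in> carrier_mat m n" and "F_K n m L DD * (Xd n m DD * L) = Ud n m DD * L"
proof -
  define P where "P = Xd n m DD * L"
  have P: "P \<in> carrier_mat n n" and UL: "Ud n m DD * L \<in> carrier_mat m n"
    unfolding P_def using data_blocks_carrier[OF DD] L by auto
  have "P \<in> Units (ring_mat TYPE(real) n undefined)"
    using det_non_zero_imp_unit[OF P] det unfolding P_def by simp
  then obtain Pinv where "mat_inverse P = Some Pinv"
    using mat_inverse(1)[OF P, of undefined] by (cases "mat_inverse P") auto
  then have Pinv: "Pinv \<in> carrier_mat n n" and "Pinv * P = 1\<^sub>m n" and K: "F_K n m L DD = Ud n m DD * L * Pinv"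
    using mat_inverse(2)[OF P] unfolding F_K_def minv_def P_def[symmetric] by auto
  then show "F_K n m L DD \<in> carrier_mat m n" and "F_K n m L DD * (Xd n m DD * L) = Ud n m DD * L"
    unfolding P_def[symmetric] using UL P by (auto simp: assoc_mult_mat[OF UL Pinv P])
qed

lemma RS_feasible_gain:
  assumes DD: "DD \<in> carrier_mat (2*n+m) T" and V: "V \<in> carrier_mat m m"
    and feas: "RS_feasible n m T Q V eps J DD L S \<alpha> \<beta>"
  shows "F_K n m L DD \<in> carrier_mat m n" and "F_K n m L DD * (Xd n m DD * L) = Ud n m DD * L"
    and "psd (Xd n m DD * L)"
proof -
  have L: "L \<in> carrier_mat T n" and S: "S \<in> carrier_mat m m" and F: "psd (F_mat n m V L S DD)"
    using feas unfolding RS_feasible_def by auto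
  have P: "Xd n m DD * L \<in> carrier_mat n n" and G: "V * Ud n m DD * L \<in> carrier_mat m n"
    using data_blocks_carrier[OF DD] L V by auto
  note blocks = F_mat_psd_blocks[OF DD L S V F]
  show "F_K n m L DD \<in> carrier_mat m n" and "F_K n m L DD * (Xd n m DD * L) = Ud n m DD * L"
    using F_K_mult[OF DD L psd_minus_one_imp_det_nonzero[OF P blocks(2)]] by auto
  show "psd (Xd n m DD * L)" using psd_four_block_mat(2)[OF blocks(1) S G _ P] G by simp
qed

text \<open>The gain block of F_mat is the Schur-complement form of S \<succeq> (V K) P (V K)^T.\<close>
lemma RS_feasible_trace_le:
  assumes DD: "DD \<in> carrier_mat (2*n+m) T" and Q: "Q \<in> carrier_mat n n" and V: "V \<in> carrier_mat m m"
    and feas: "RS_feasible n m T Q V eps J DD L S \<alpha> \<beta>"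
  defines "P \<equiv> Xd n m DD * L" and "K \<equiv> F_K n m L DD"
  shows "mtrace (Q * P) + mtrace (transpose_mat (V * K) * (V * K) * P) \<le> J"
proof -
  have L: "L \<in> carrier_mat T n" and S: "S \<in> carrier_mat m m" and F: "psd (F_mat n m V L S DD)"
    and trace: "mtrace (Q * Xd n m DD * L) + mtrace S \<le> J"
    using feas unfolding RS_feasible_def by auto
  have P: "P \<in> carrier_mat n n" unfolding P_def using data_blocks_carrier[OF DD] L by simp
  have K: "K \<in> carrier_mat m n" and KP: "K * P = Ud n m DD * L"
    using RS_feasible_gain[OF DD V feas] unfolding K_def P_def by auto
  have "V * Ud n m DD * L = transpose_mat (transpose_mat (V * K)) * P"
    using V K P data_blocks_carrier[OF DD] L by (simp add: KP[symmetric] assoc_mult_mat[of _ m m _ n _ n])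
  from F_mat_psd_blocks(1)[OF DD L S V F, folded P_def, unfolded this]
  have "mtrace (transpose_mat (V * K) * transpose_mat (transpose_mat (V * K)) * P) \<le> mtrace S"
    by (rule psd_four_block_schur_trace_le[OF _ S _ P]) (use V K in simp)
  then have "mtrace (transpose_mat (V * K) * (V * K) * P) \<le> mtrace S" by simp
  moreover have "Q * Xd n m DD * L = Q * P"
    unfolding P_def using Q data_blocks_carrier[OF DD] L by (simp add: assoc_mult_mat[of _ n n _ T _ n])
  ultimately show ?thesis using trace by simp
qed

theorem proposition7:
  fixes n m T :: nat
    and A B Q R V X U Z \<Delta> L S :: "real mat"
    and eps J_LQR \<alpha> \<beta> :: real
  assumes n_pos: "0 < n"
    and A: "A \<in> carrier_mat n n" and B: "B \<in> carrier_mat n m"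
    and X: "X \<in> carrier_mat n T" and U: "U \<in> carrier_mat m T"
    and Z: "Z = A * X + B * U"
    and Delta: "\<Delta> \<in> carrier_mat (2*n+m) T"
    and eps: "eps > 0" and J: "J_LQR > 0"
    and Q: "Q \<in> carrier_mat n n" "psd Q"
    and R: "R \<in> carrier_mat m m" "pd R"
    and V: "V \<in> carrier_mat m m" "pd V" "V * V = R"
    and feas: "RS_feasible n m T Q V eps J_LQR (vcat Z (vcat X U) + \<Delta>) L S \<alpha> \<beta>"
  shows "(\<Delta> = 0\<^sub>m (2*n+m) T \<longrightarrow>
            lqr_cost n A B Q R (F_K n m L (vcat Z (vcat X U) + \<Delta>)) \<le> ereal J_LQR)
       \<and> (max_norm \<Delta> \<le> eps \<longrightarrow>
            schur_stable (A + B * F_K n m L (vcat Z (vcat X U) + \<Delta>)))"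
proof -
  define DD where "DD = vcat Z (vcat X U) + \<Delta>"
  define P where "P = Xd n m DD * L"
  define K where "K = F_K n m L DD"
  have DDc: "DD \<in> carrier_mat (2*n+m) T"
    unfolding DD_def Z using data_mat_carrier[OF A B X U] Delta by simp
  have L: "L \<in> carrier_mat T n" using feas unfolding RS_feasible_def DD_def by simp
  have P: "P \<in> carrier_mat n n" unfolding P_def using data_blocks_carrier[OF DDc] L by simp
  note gain = RS_feasible_gain[OF DDc V(1) feas[folded DD_def], folded P_def K_def]
  have cert: "lyapunov_certificate (A + B * K) P"
    if "\<And>i j. i < 2*n+m \<Longrightarrow> j < T \<Longrightarrow> \<bar>\<Delta> $$ (i,j)\<bar> \<le> eps"
    using robust_lmi_imp_lyapunov_certificate[OF A B X U Z Delta that DD_def L gain(1)] gain(2,3) feas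
    unfolding P_def RS_feasible_def DD_def by blast
  show ?thesis unfolding DD_def[symmetric] K_def[symmetric]
  proof (intro conjI impI)
    assume "\<Delta> = 0\<^sub>m (2*n+m) T"
    then have "lyapunov_certificate (A + B * K) P" using cert eps by simp
    then have "lqr_cost n A B Q R K \<le> ereal (mtrace (Q * P) + mtrace (transpose_mat (V * K) * (V * K) * P))"
      using lqr_cost_le_trace[OF n_pos A B gain(1) Q V(1) _ V(3) P] V(2) unfolding pd_def by simp
    also have "\<dots> \<le> ereal J_LQR"
      using RS_feasible_trace_le[OF DDc Q(1) V(1) feas[folded DD_def]] unfolding P_def K_def by simp
    finally show "lqr_cost n A B Q R K \<le> ereal J_LQR" .
  next
    assume "max_norm \<Delta> \<le> eps"
    then have "lyapunov_certificate (A + B * K) P" using cert max_norm_entry_le[OF Delta] by blast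
    then show "schur_stable (A + B * K)"
      unfolding schur_stable_def using lyapunov_certificate_imp_rho_less_1[OF n_pos _ P] A B gain(1) by simp
  qed
qed

end
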